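(* Let $S$ be a 3-SAT instance with $n$ variables and $m$ clauses, and let $G(S)$ be the graph associated to $S$ as described in the context. If $\operatorname{cdim}(G(S))=2(m+n)$, then $S$ is satisfiable.
   Context: All graphs are finite, simple, undirected. For distinct vertices $v,w$, $\kappa(v,w)$ is the maximum number of internally vertex-disjoint $v$–$w$ paths (an edge $vw$ counts as one such path); $\kappa(v,v)=\infty$. For an ordered vertex set $W=(w_1,\ldots,w_k)$, $r_G(v,W)=[\kappa(v,w_1),\ldots,\kappa(v,w_k)]$. $W$ is resolving if $r_G(v_1,W)=r_G(v_2,W)$ implies $v_1=v_2$; $\operatorname{cdim}(G)$ is the minimum cardinality of a resolving set. Construction of $G(S)$: $S$ is a CNF formula on variables $X_1,\ldots,X_n$ with clauses $C_1,\ldots,C_m$, each clause a disjunction of at most three literals on pairwise distinct variables, and every variable occurring in at least one clause. For each variable $X_i$ take a gadget on vertices $x_i^1,\ldots,x_i^5$ with edges $x_i^1x_i^2, x_i^1x_i^3, x_i^1x_i^4, x_i^1x_i^5, x_i^2x_i^3, x_i^2x_i^4, x_i^2x_i^5, x_i^3x_i^4, x_i^3x_i^5$ (i.e. $K_5$ minus the edge $x_i^4x_i^5$). For each clause $C_j$ take a gadget on vertices $c_j^1,\ldots,c_j^6$ with edges: $c_j^3,c_j^4,c_j^5$ pairwise adjacent, and each of $c_j^1,c_j^2,c_j^6$ adjacent to each of $c_j^3,c_j^4,c_j^5$ (no other edges). All gadgets are vertex-disjoint. Further edges: if $X_i$ occurs as a positive literal in $C_j$, add $c_j^1x_i^1$,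 $c_j^2x_i^1$, $c_j^2x_i^2$; if $X_i$ occurs as a negative literal in $C_j$, add $c_j^1x_i^1$, $c_j^1x_i^2$, $c_j^2x_i^2$; no edges between the gadgets of $X_i$ and $C_j$ if $X_i$ does not occur in $C_j$. Finally, for every pair of distinct clauses $C_j\neq C_k$ add the edges $c_j^1c_k^1$, $c_j^1c_k^2$, $c_j^2c_k^1$, $c_j^2c_k^2$. *)

theory Defs
  imports Main "HOL-Library.Extended_Nat"
begin

text \<open>A graph is given by a vertex set V and a (symmetric, irreflexive) adjacency
  predicate E.\<close>

definition is_path :: "'a set \<Rightarrow> ('a \<Rightarrow> 'a \<Rightarrow> bool) \<Rightarrow> 'a \<Rightarrow> 'a \<Rightarrow> 'a list \<Rightarrow> bool" where
  "is_path V E v w p \<longleftrightarrow> p \<noteq> [] \<and> hd p = v \<and> last p = w \<and> distinct p \<and> set p \<subseteq> V \<and>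
     (\<forall>i. Suc i < length p \<longrightarrow> E (p ! i) (p ! Suc i))"

definition interior :: "'a list \<Rightarrow> 'a set" where
  "interior p = set (butlast (tl p))"

text \<open>A set of pairwise internally vertex-disjoint v-w paths (the single-edge path
  [v,w] can occur at most once, since P is a set).\<close>
definition int_disjoint_paths :: "'a set \<Rightarrow> ('a \<Rightarrow> 'a \<Rightarrow> bool) \<Rightarrow> 'a \<Rightarrow> 'a \<Rightarrow> 'a list set \<Rightarrow> bool" where
  "int_disjoint_paths V E v w P \<longleftrightarrow> (\<forall>p\<in>P. is_path V E v w p) \<and>
     (\<forall>p\<in>P. \<forall>q\<in>P. p \<noteq> q \<longrightarrow> interior p \<inter> interior q = {})"

definition kappa :: "'a set \<Rightarrow> ('a \<Rightarrow> 'a \<Rightarrow> bool) \<Rightarrow> 'a \<Rightarrow> 'a \<Rightarrow> enat" where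
  "kappa V E v w = (if v = w then \<infinity>
     else enat (Max (card ` {P. int_disjoint_paths V E v w P})))"

text \<open>W resolving: vertices with equal vectors (kappa(v,w_1),...,kappa(v,w_k)) coincide.
  Equality of these ordered vectors is componentwise equality over the elements of W.\<close>
definition resolving :: "'a set \<Rightarrow> ('a \<Rightarrow> 'a \<Rightarrow> bool) \<Rightarrow> 'a set \<Rightarrow> bool" where
  "resolving V E W \<longleftrightarrow> W \<subseteq> V \<and>
     (\<forall>v1\<in>V. \<forall>v2\<in>V. (\<forall>w\<in>W. kappa V E v1 w = kappa V E v2 w) \<longrightarrow> v1 = v2)"

definition cdim :: "'a set \<Rightarrow> ('a \<Rightarrow> 'a \<Rightarrow> bool) \<Rightarrow> nat" where
  "cdim V E = (LEAST k. \<exists>W. resolving V E W \<and> finite W \<and> card W = k)"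

text \<open>Variables are X_0,...,X_{n-1}; a literal is (i, True) for X_i and (i, False) for
  the negation of X_i; a formula is a list of clauses C_0,...,C_{m-1}, each a set of literals.\<close>

type_synonym literal = "nat \<times> bool"
type_synonym clause = "literal set"

definition sat3_instance :: "nat \<Rightarrow> clause list \<Rightarrow> bool" where
  "sat3_instance n cs \<longleftrightarrow>
     (\<forall>C\<in>set cs. C \<noteq> {} \<and> card C \<le> 3 \<and> finite C \<and>
        (\<forall>(i,b)\<in>C. i < n) \<and>
        (\<forall>(i,b)\<in>C. \<forall>(i',b')\<in>C. i = i' \<longrightarrow> b = b')) \<and>
     (\<forall>i<n. \<exists>C\<in>set cs. \<exists>b. (i,b) \<in> C)"

definition satisfiable :: "clause list \<Rightarrow> bool" where
  "satisfiable cs \<longleftrightarrow> (\<exists>\<sigma> :: nat \<Rightarrow> bool. \<forall>C\<in>set cs. \<exists>(i,b)\<in>C. \<sigma> i = b)"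

datatype gvert = XV nat nat | CV nat nat   \<comment> \<open>XV i k = x_i^k, CV j k = c_j^k\<close>

definition GV :: "nat \<Rightarrow> clause list \<Rightarrow> gvert set" where
  "GV n cs = {XV i k | i k. i < n \<and> k \<in> {1..5}} \<union> {CV j k | j k. j < length cs \<and> k \<in> {1..6}}"

definition GE0 :: "nat \<Rightarrow> clause list \<Rightarrow> gvert \<Rightarrow> gvert \<Rightarrow> bool" where
  "GE0 n cs u v \<longleftrightarrow>
     (\<exists>i a b. i < n \<and> u = XV i a \<and> v = XV i b \<and>
        (a, b) \<in> {(1,2),(1,3),(1,4),(1,5),(2,3),(2,4),(2,5),(3,4),(3,5)}) \<or>
     (\<exists>j a b. j < length cs \<and> u = CV j a \<and> v = CV j b \<and>
        (a, b) \<in> {(3,4),(3,5),(4,5)} \<union> ({1,2,6} \<times> {3,4,5})) \<or>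
     (\<exists>j i. j < length cs \<and> i < n \<and> (i, True) \<in> cs ! j \<and>
        ((u = CV j 1 \<and> v = XV i 1) \<or> (u = CV j 2 \<and> v = XV i 1) \<or> (u = CV j 2 \<and> v = XV i 2))) \<or>
     (\<exists>j i. j < length cs \<and> i < n \<and> (i, False) \<in> cs ! j \<and>
        ((u = CV j 1 \<and> v = XV i 1) \<or> (u = CV j 1 \<and> v = XV i 2) \<or> (u = CV j 2 \<and> v = XV i 2))) \<or>
     (\<exists>j k a b. j < length cs \<and> k < length cs \<and> j \<noteq> k \<and> a \<in> {1,2} \<and> b \<in> {1,2} \<and>
        u = CV j a \<and> v = CV k b)"

definition GE :: "nat \<Rightarrow> clause list \<Rightarrow> gvert \<Rightarrow> gvert \<Rightarrow> bool" where
  "GE n cs u v \<longleftrightarrow> GE0 n cs u v \<or> GE0 n cs v u"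

end

(* Every resolving set W of G(S) contains one of the twins x_i^4, x_i^5 and two of the three
   mutual twins c_j^3, c_j^4, c_j^5.  It also contains a second vertex of each variable gadget:
   outside the gadget, x_i^3, x_i^4 and x_i^5 are only reachable through x_i^1 and x_i^2, so if
   W met the gadget only in x_i^4 (say), then x_i^3 and x_i^5 would not be resolved.  Hence
   |W| >= 2(m + n), and if |W| = 2(m + n) then W contains none of c_j^1, c_j^2, c_j^6 and at most
   one of x_i^1, x_i^2.  Set X_i true iff x_i^1 is in W.  A clause C_j falsified by this
   assignment would leave c_j^1 and c_j^2 unresolved: computing local connectivities with explicit
   fans and vertex cuts shows that they have the same connectivity to every vertex that can lie
   in W, in particular to x_i^1 when X_i does not occur positively in C_j (and, by the symmetry
   exchanging x_i^1 with x_i^2 and negating all literals, to x_i^2 when X_i does not occur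
   negatively). *)

theory Submission
  imports Defs "HOL-Combinatorics.Transposition"
begin

section \<open>Internally disjoint paths in a finite graph\<close>

lemma is_path_finite:
  assumes "finite V" shows "finite {p. is_path V E v w p}"
proof -
  have "{p. is_path V E v w p} \<subseteq> {xs. set xs \<subseteq> V \<and> distinct xs}"
    by (auto simp: is_path_def)
  thus ?thesis using finite_subset_distinct[OF assms] finite_subset by blast
qed

lemma int_disjoint_paths_finite:
  assumes "finite V" shows "finite {P. int_disjoint_paths V E v w P}"
proof -
  have "{P. int_disjoint_paths V E v w P} \<subseteq> Pow {p. is_path V E v w p}"
    by (auto simp: int_disjoint_paths_def)
  thus ?thesis using is_path_finite[OF assms] finite_subset by blast
qed

lemma card_le_kappa:
  assumes "finite V" "v \<noteq> w" "int_disjoint_paths V E v w P"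
  shows "enat (card P) \<le> kappa V E v w"
proof -
  have "card P \<le> Max (card ` {P. int_disjoint_paths V E v w P})"
    using assms by (intro Max_ge) (auto intro: int_disjoint_paths_finite)
  thus ?thesis using assms(2) by (simp add: kappa_def)
qed

lemma kappa_attained:
  assumes "finite V" "v \<noteq> w"
  obtains P where "int_disjoint_paths V E v w P" "kappa V E v w = enat (card P)"
proof -
  let ?C = "card ` {P. int_disjoint_paths V E v w P}"
  have "{} \<in> {P. int_disjoint_paths V E v w P}" by (simp add: int_disjoint_paths_def)
  hence "Max ?C \<in> ?C" using int_disjoint_paths_finite[OF assms(1)] by (intro Max_in) auto
  thus ?thesis using that assms(2) by (auto simp: kappa_def)
qed

lemma kappa_leI:
  assumes "finite V" "v \<noteq> w" "\<And>P. int_disjoint_paths V E v w P \<Longrightarrow> card P \<le> N"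
  shows "kappa V E v w \<le> enat N"
  using kappa_attained[OF assms(1,2)] assms(3) by (metis enat_ord_simps(1))

lemma kappa_neq_infinity: "v \<noteq> w \<Longrightarrow> kappa V E v w \<noteq> \<infinity>"
  by (simp add: kappa_def)

lemma kappa_mono_map:
  assumes "finite V" "finite V'" "v \<noteq> w" "v' \<noteq> w'"
    and "\<And>P. int_disjoint_paths V E v w P \<Longrightarrow>
           \<exists>P'. int_disjoint_paths V' E' v' w' P' \<and> card P' = card P"
  shows "kappa V E v w \<le> kappa V' E' v' w'"
proof -
  obtain P where P: "int_disjoint_paths V E v w P" "kappa V E v w = enat (card P)"
    using kappa_attained[OF assms(1,3)] by blast
  then obtain P' where "int_disjoint_paths V' E' v' w' P'" "card P' = card P"
    using assms(5) by blast
  thus ?thesis using P(2) card_le_kappa[OF assms(2,4)] by metis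
qed

lemma nat_crossing:
  fixes P :: "nat \<Rightarrow> bool"
  assumes "P j" "\<not> P e" "j \<le> e"
  obtains l where "j \<le> l" "l < e" "P l" "\<not> P (Suc l)"
proof -
  have "P e" if "\<forall>l. j \<le> l \<longrightarrow> l < e \<longrightarrow> P l \<longrightarrow> P (Suc l)"
    using assms(3,1) by (induction rule: dec_induct) (use that in auto)
  thus ?thesis using assms(2) that by blast
qed

lemma is_path_nth_first: "is_path V E v w p \<Longrightarrow> p ! 0 = v"
  by (auto simp: is_path_def hd_conv_nth)

lemma is_path_nth_last: "is_path V E v w p \<Longrightarrow> p ! (length p - 1) = w"
  by (auto simp: is_path_def last_conv_nth)

lemma is_path_length:
  assumes "is_path V E v w p" "v \<noteq> w" shows "2 \<le> length p"
proof -
  have "p \<noteq> []" using assms(1) by (auto simp: is_path_def)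
  moreover have "length p \<noteq> 1"
    using is_path_nth_first[OF assms(1)] is_path_nth_last[OF assms(1)] assms(2) by auto
  ultimately show ?thesis by (cases p) (auto simp: Suc_le_eq)
qed

lemma mem_interior:
  assumes "x \<in> set p" "x \<noteq> hd p" "x \<noteq> last p"
  shows "x \<in> interior p"
proof -
  obtain a t where p: "p = a # t" and xt: "x \<in> set t" using assms by (cases p) auto
  hence "t \<noteq> []" by auto
  hence "t = butlast t @ [last t]" "last t = last p" using p by simp_all
  hence "x \<in> set (butlast t)" using xt assms(3) by (metis Un_iff empty_iff empty_set list.set(2) set_append singletonD)
  thus ?thesis by (simp add: interior_def p)
qed

lemma is_path_singleton: "is_path V E v w [x] \<longleftrightarrow> x = v \<and> x = w \<and> x \<in> V"
  by (auto simp: is_path_def)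

lemma is_path_Cons_Cons:
  "is_path V E v w (u # x # r) \<longleftrightarrow>
     u = v \<and> v \<in> V \<and> v \<notin> set (x # r) \<and> E v x \<and> is_path V E x w (x # r)"
proof -
  have "(\<forall>i. Suc i < length (u # x # r) \<longrightarrow> E ((u # x # r) ! i) ((u # x # r) ! Suc i)) \<longleftrightarrow>
        E u x \<and> (\<forall>i. Suc i < length (x # r) \<longrightarrow> E ((x # r) ! i) ((x # r) ! Suc i))"
    (is "?L \<longleftrightarrow> ?R")
  proof
    assume ?L
    thus ?R by (metis length_Cons not_less_eq nth_Cons_0 nth_Cons_Suc zero_less_Suc)
  next
    assume R: ?R
    show ?L
    proof (intro allI impI)
      fix i assume "Suc i < length (u # x # r)"
      thus "E ((u # x # r) ! i) ((u # x # r) ! Suc i)" using R by (cases i) auto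
    qed
  qed
  thus ?thesis unfolding is_path_def by auto
qed

lemma interior_simps:
  "interior [a, b] = {}" "interior [a, b, c] = {b}" "interior [a, b, c, d] = {b, c}"
  by (auto simp: interior_def)

subsection \<open>Upper bounds from vertex cuts\<close>

definition separates :: "'a set \<Rightarrow> ('a \<Rightarrow> 'a \<Rightarrow> bool) \<Rightarrow> 'a set \<Rightarrow> 'a set \<Rightarrow> 'a \<Rightarrow> 'a \<Rightarrow> bool" where
  "separates V E S B v w \<longleftrightarrow> v \<notin> B \<and> w \<in> B \<and> v \<notin> S \<and> w \<notin> S \<and>
     (\<forall>x\<in>V. \<forall>y\<in>V. E x y \<longrightarrow> x \<notin> B \<longrightarrow> y \<in> B \<longrightarrow> x \<in> S \<or> y \<in> S \<or> (x = v \<and> y = w))"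

lemma separatesI:
  assumes "v \<notin> B" "w \<in> B" "v \<notin> S" "w \<notin> S"
    and "\<And>x y. E x y \<Longrightarrow> x \<notin> B \<Longrightarrow> y \<in> B \<Longrightarrow> x \<in> S \<or> y \<in> S \<or> (x = v \<and> y = w)"
  shows "separates V E S B v w"
  using assms unfolding separates_def by blast

lemma separates_path_meets:
  assumes sep: "separates V E S B v w" and p: "is_path V E v w p" and "p \<noteq> [v, w]"
  shows "interior p \<inter> S \<noteq> {}"
proof -
  let ?L = "length p"
  have vw: "v \<noteq> w" and vS: "v \<notin> S" and wS: "w \<notin> S" using sep by (auto simp: separates_def)
  have L: "2 \<le> ?L" using is_path_length[OF p vw] .
  have pd: "distinct p" "set p \<subseteq> V" "\<And>i. Suc i < ?L \<Longrightarrow> E (p ! i) (p ! Suc i)"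
    "hd p = v" "last p = w"
    using p by (auto simp: is_path_def)
  obtain l where l: "l < ?L - 1" "p ! l \<notin> B" "p ! Suc l \<in> B"
    using nat_crossing[of "\<lambda>k. p ! k \<notin> B" 0 "?L - 1"] sep
      is_path_nth_first[OF p] is_path_nth_last[OF p] by (auto simp: separates_def)
  have inV: "p ! l \<in> V" "p ! Suc l \<in> V" using pd(2) l(1) by (auto dest: nth_mem)
  have "p ! l \<in> S \<or> p ! Suc l \<in> S \<or> (p ! l = v \<and> p ! Suc l = w)"
    using sep inV pd(3) l by (auto simp: separates_def)
  moreover have "\<not> (p ! l = v \<and> p ! Suc l = w)"
  proof
    assume a: "p ! l = v \<and> p ! Suc l = w"
    have "p ! l = p ! 0" "p ! Suc l = p ! (?L - 1)"
      using a is_path_nth_first[OF p] is_path_nth_last[OF p] by auto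
    moreover have "l < ?L" "Suc l < ?L" "0 < ?L" "?L - 1 < ?L" using l(1) by auto
    ultimately have "l = 0" "Suc l = ?L - 1"
      using nth_eq_iff_index_eq[OF pd(1)] by blast+
    hence "p = [p ! 0, p ! 1]" using L by (cases p; cases "tl p") auto
    thus False using a \<open>l = 0\<close> \<open>p \<noteq> [v, w]\<close> by simp
  qed
  moreover have "p ! l \<in> set p" "p ! Suc l \<in> set p" using l(1) by (simp_all add: nth_mem)
  ultimately obtain x where x: "x \<in> set p" "x \<in> S" by blast
  hence "x \<noteq> hd p" "x \<noteq> last p" using vS wS pd(4,5) by auto
  thus ?thesis using mem_interior[OF x(1)] x(2) by blast
qed

lemma kappa_le_separator:
  assumes "finite V" "finite S" and sep: "separates V E S B v w"
  shows "kappa V E v w \<le> enat (card S + (if E v w then 1 else 0))"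
proof (rule kappa_leI[OF assms(1)])
  show vw: "v \<noteq> w" using sep by (auto simp: separates_def)
  fix P assume P: "int_disjoint_paths V E v w P"
  let ?P' = "P - {[v, w]}"
  define g where "g p = (SOME x. x \<in> interior p \<inter> S)" for p :: "'a list"
  have g: "g p \<in> interior p \<inter> S" if "p \<in> ?P'" for p
  proof -
    have "is_path V E v w p" using P that by (auto simp: int_disjoint_paths_def)
    hence "interior p \<inter> S \<noteq> {}" using separates_path_meets[OF sep] that by blast
    thus ?thesis unfolding g_def by (metis some_in_eq)
  qed
  have "inj_on g ?P'"
  proof (rule inj_onI)
    fix p q assume pq: "p \<in> ?P'" "q \<in> ?P'" "g p = g q"
    hence "interior p \<inter> interior q \<noteq> {}" using g[OF pq(1)] g[OF pq(2)] by auto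
    thus "p = q" using P pq(1,2) unfolding int_disjoint_paths_def by blast
  qed
  hence "card ?P' \<le> card S" using card_inj_on_le[OF _ _ assms(2)] g by blast
  moreover have "[v, w] \<in> P \<Longrightarrow> E v w"
    using P by (auto simp: int_disjoint_paths_def is_path_def)
  moreover have "finite P"
    using P is_path_finite[OF assms(1), of E v w] finite_subset
    unfolding int_disjoint_paths_def by (metis mem_Collect_eq subsetI)
  hence "card P \<le> card ?P' + (if [v, w] \<in> P then 1 else 0)"
    by (cases "[v, w] \<in> P") (auto simp: card_Diff_singleton)
  ultimately show "card P \<le> card S + (if E v w then 1 else 0)" by (auto split: if_splits)
qed

subsection \<open>Lower bounds from fans\<close>

lemma int_disjoint_paths_fan:
  assumes "\<And>c. c \<in> T \<Longrightarrow> is_path V E v w [v, c, w]" "\<And>q. q \<in> Q \<Longrightarrow> is_path V E v w q"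
    and "\<And>q q'. q \<in> Q \<Longrightarrow> q' \<in> Q \<Longrightarrow> q \<noteq> q' \<Longrightarrow> interior q \<inter> interior q' = {}"
    and "\<And>q. q \<in> Q \<Longrightarrow> interior q \<inter> T = {}"
  shows "int_disjoint_paths V E v w ((\<lambda>c. [v, c, w]) ` T \<union> Q)"
  using assms unfolding int_disjoint_paths_def by (auto simp: interior_simps; blast)

lemma card_fan:
  assumes "finite T" "finite Q" "\<And>q. q \<in> Q \<Longrightarrow> interior q \<inter> T = {}"
  shows "card ((\<lambda>c. [v, c, w]) ` T \<union> Q) = card T + card Q"
proof -
  have "[v, c, w] \<notin> Q" if "c \<in> T" for c
    using assms(3)[of "[v, c, w]"] that by (auto simp: interior_simps)
  hence "(\<lambda>c. [v, c, w]) ` T \<inter> Q = {}" by blast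
  moreover have "inj_on (\<lambda>c. [v, c, w]) T" by (auto intro: inj_onI)
  ultimately show ?thesis using assms(1,2) by (simp add: card_Un_disjoint card_image)
qed

lemma kappa_ge_fan:
  assumes "finite V" "v \<noteq> w" "finite T" "finite Q"
    and "\<And>c. c \<in> T \<Longrightarrow> is_path V E v w [v, c, w]" "\<And>q. q \<in> Q \<Longrightarrow> is_path V E v w q"
    and "\<And>q q'. q \<in> Q \<Longrightarrow> q' \<in> Q \<Longrightarrow> q \<noteq> q' \<Longrightarrow> interior q \<inter> interior q' = {}"
    and "\<And>q. q \<in> Q \<Longrightarrow> interior q \<inter> T = {}"
  shows "enat (card T + card Q) \<le> kappa V E v w"
proof -
  have "int_disjoint_paths V E v w ((\<lambda>c. [v, c, w]) ` T \<union> Q)"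
    using assms(5-8) by (rule int_disjoint_paths_fan)
  from card_le_kappa[OF assms(1,2) this] show ?thesis using card_fan[OF assms(3,4,8)] by simp
qed

lemma kappa_common_neighbours:
  assumes "finite V" "finite S" and sep: "separates V E S B v w"
    and "v \<in> V" "w \<in> V" "S \<subseteq> V" "\<And>s. s \<in> S \<Longrightarrow> E v s \<and> E s w"
  shows "kappa V E v w = card S + (if E v w then 1 else 0)"
proof (rule order_antisym)
  show "kappa V E v w \<le> card S + (if E v w then 1 else 0)"
    using kappa_le_separator[OF assms(1-3)] by simp
  have vw: "v \<noteq> w" "v \<notin> S" "w \<notin> S" using sep by (auto simp: separates_def)
  let ?Q = "if E v w then {[v, w]} else {}"
  have "enat (card S + card ?Q) \<le> kappa V E v w"
    by (rule kappa_ge_fan[OF assms(1) vw(1) assms(2)])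
      (use assms vw in \<open>auto simp: is_path_Cons_Cons is_path_singleton interior_simps split: if_splits\<close>)
  thus "enat (card S + (if E v w then 1 else 0)) \<le> kappa V E v w" by (simp split: if_splits)
qed

lemma kappa_le_embedding:
  assumes "finite V" "finite V'" "inj f" "\<And>x. x \<in> V \<Longrightarrow> f x \<in> V'"
    and "\<And>x y. E x y \<Longrightarrow> E' (f x) (f y)"
  shows "kappa V E v w \<le> kappa V' E' (f v) (f w)"
proof (cases "v = w")
  case True thus ?thesis by (simp add: kappa_def)
next
  case False
  hence fvw: "f v \<noteq> f w" using assms(3) by (auto dest: injD)
  show ?thesis
  proof (rule kappa_mono_map[OF assms(1,2) False fvw])
    fix P assume P: "int_disjoint_paths V E v w P"
    have path: "is_path V' E' (f v) (f w) (map f p)" if p: "is_path V E v w p" for p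
    proof -
      have "distinct (map f p)" using p assms(3) by (simp add: is_path_def distinct_map inj_on_def)
      moreover have "set (map f p) \<subseteq> V'" using p assms(4) by (auto simp: is_path_def)
      moreover have "E' (map f p ! i) (map f p ! Suc i)" if "Suc i < length p" for i
        using p that assms(5) by (simp add: is_path_def)
      ultimately show ?thesis using p by (simp add: is_path_def hd_map last_map)
    qed
    have int: "interior (map f p) = f ` interior p" for p
      unfolding interior_def map_tl[symmetric] map_butlast[symmetric] by simp
    have "int_disjoint_paths V' E' (f v) (f w) (map f ` P)"
      unfolding int_disjoint_paths_def
    proof (intro conjI ballI impI)
      fix p' assume "p' \<in> map f ` P"
      thus "is_path V' E' (f v) (f w) p'" using P path by (auto simp: int_disjoint_paths_def)
    next
      fix p' q' assume "p' \<in> map f ` P" "q' \<in> map f ` P" "p' \<noteq> q'"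
      then obtain p q where "p \<in> P" "q \<in> P" "p \<noteq> q" "p' = map f p" "q' = map f q" by auto
      hence "interior p \<inter> interior q = {}" "p' = map f p" "q' = map f q"
        using P by (auto simp: int_disjoint_paths_def)
      thus "interior p' \<inter> interior q' = {}"
        using int image_Int[OF assms(3)] by (metis image_empty)
    qed
    moreover have "card (map f ` P) = card P"
      using inj_mapI[OF assms(3)] by (metis card_image inj_on_subset subset_UNIV)
    ultimately show "\<exists>P'. int_disjoint_paths V' E' (f v) (f w) P' \<and> card P' = card P" by blast
  qed
qed

lemma kappa_involution:
  assumes "finite V" "finite V'" "\<And>x. f (f x) = x" "\<And>x. f x \<in> V' \<longleftrightarrow> x \<in> V"
    and "\<And>x y. E' (f x) (f y) \<longleftrightarrow> E x y"
  shows "kappa V' E' (f v) (f w) = kappa V E v w"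
proof (rule order_antisym)
  have "inj f" by (metis assms(3) injI)
  have "kappa V' E' (f v) (f w) \<le> kappa V E (f (f v)) (f (f w))"
    by (rule kappa_le_embedding[OF assms(2,1) \<open>inj f\<close>]) (metis assms(3-5))+
  thus "kappa V' E' (f v) (f w) \<le> kappa V E v w" using assms(3) by simp
  show "kappa V E v w \<le> kappa V' E' (f v) (f w)"
    by (rule kappa_le_embedding[OF assms(1,2) \<open>inj f\<close>]) (use assms in auto)
qed

lemma transpose_twins_adjacent:
  assumes "\<And>x y. E x y \<longleftrightarrow> E y x" "\<And>x. \<not> E x x" "\<And>z. z \<noteq> a \<Longrightarrow> z \<noteq> b \<Longrightarrow> E a z \<longleftrightarrow> E b z"
  shows "E (transpose a b x) (transpose a b y) \<longleftrightarrow> E x y"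
  using assms unfolding transpose_def by (smt (verit))

lemma kappa_twins:
  assumes "finite V" "a \<in> V" "b \<in> V" and sym: "\<And>x y. E x y \<longleftrightarrow> E y x" and irrefl: "\<And>x. \<not> E x x"
    and twins: "\<And>z. z \<noteq> a \<Longrightarrow> z \<noteq> b \<Longrightarrow> E a z \<longleftrightarrow> E b z" and "w \<noteq> a" "w \<noteq> b"
  shows "kappa V E a w = kappa V E b w"
proof -
  have "kappa V E (transpose a b a) (transpose a b w) = kappa V E a w"
    by (rule kappa_involution[OF assms(1,1)])
      (use assms(2,3) transpose_twins_adjacent[OF sym irrefl twins] in \<open>auto simp: transpose_def\<close>)
  thus ?thesis using assms(7,8) by simp
qed

lemma is_path_reroute:
  assumes p: "is_path V E u w p" and k: "0 < k" "k < length p - 1"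
    and v: "v \<in> V" "E v (p ! k)" "v \<notin> set (drop k p)"
  shows "is_path V E v w (v # drop k p)" and "interior (v # drop k p) \<subseteq> interior p"
    and "p ! k \<in> interior (v # drop k p)"
proof -
  let ?d = "drop k p"
  have pd: "distinct p" "set p \<subseteq> V" "\<And>i. Suc i < length p \<Longrightarrow> E (p ! i) (p ! Suc i)" "last p = w"
    using p by (auto simp: is_path_def)
  have d: "?d \<noteq> []" "?d ! 0 = p ! k" using k by auto
  show path: "is_path V E v w (v # ?d)"
    unfolding is_path_def
  proof (intro conjI allI impI)
    show "last (v # ?d) = w" using d(1) pd(4) by (simp add: last_drop)
    show "distinct (v # ?d)" using v(3) pd(1) by simp
    show "set (v # ?d) \<subseteq> V" using v(1) pd(2) set_drop_subset[of k p] by auto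
  next
    fix i assume i: "Suc i < length (v # ?d)"
    show "E ((v # ?d) ! i) ((v # ?d) ! Suc i)"
    proof (cases i)
      case 0 thus ?thesis using d v(2) by simp
    next
      case (Suc i')
      thus ?thesis using pd(3)[of "k + i'"] i by simp
    qed
  qed simp_all
  have "interior (v # ?d) = set (drop k (butlast p))" by (simp add: interior_def butlast_drop)
  also have "\<dots> \<subseteq> set (drop 1 (butlast p))" using k(1) by (intro set_drop_subset_set_drop) simp
  also have "\<dots> = interior p" by (simp add: interior_def butlast_tl drop_Suc)
  finally show "interior (v # ?d) \<subseteq> interior p" .
  have "p ! k \<noteq> p ! (length p - 1)" using k nth_eq_iff_index_eq[OF pd(1)] by simp
  hence "p ! k \<noteq> w" using is_path_nth_last[OF p] by simp
  moreover have "p ! k \<in> set ?d" "p ! k \<noteq> v" using d v(3) by (metis nth_mem length_greater_0_conv)+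
  ultimately show "p ! k \<in> interior (v # ?d)" using path by (intro mem_interior) (auto simp: is_path_def)
qed

lemma path_last_boundary_vertex:
  assumes p: "is_path V E u w p" and A: "u \<in> A" "w \<notin> A \<union> S" "A \<inter> S = {}"
    and nb: "\<And>x y. x \<in> A \<Longrightarrow> y \<in> V \<Longrightarrow> E x y \<Longrightarrow> y \<in> A \<or> y \<in> S"
  shows "\<exists>k. 0 < k \<and> k < length p - 1 \<and> p ! k \<in> S \<and> (\<forall>j. k < j \<longrightarrow> j < length p \<longrightarrow> p ! j \<notin> A \<union> S)"
proof -
  let ?L = "length p" and ?IA = "{j. j < length p \<and> p ! j \<in> A}" and ?IS = "{j. j < length p \<and> p ! j \<in> S}"
  have pd: "p ! 0 = u" "p ! (?L - 1) = w" "0 < ?L" "set p \<subseteq> V" "\<And>i. Suc i < ?L \<Longrightarrow> E (p ! i) (p ! Suc i)"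
    using p is_path_nth_first[OF p] is_path_nth_last[OF p] by (auto simp: is_path_def)
  define l where "l = Max ?IA"
  have "0 \<in> ?IA" "finite ?IA" using pd A by simp_all
  hence l: "l \<in> ?IA" "\<And>j. j \<in> ?IA \<Longrightarrow> j \<le> l"
    unfolding l_def using Max_in Max_ge by blast+
  hence "l \<noteq> ?L - 1" using pd(2) A(2) by auto
  hence lL: "Suc l < ?L" using l(1) by auto
  hence "p ! Suc l \<notin> A" using l(2)[of "Suc l"] by auto
  moreover have "p ! Suc l \<in> V" using lL pd(4) nth_mem by blast
  ultimately have "Suc l \<in> ?IS" using nb[OF _ _ pd(5)[OF lL]] l(1) lL by auto
  define k where "k = Max ?IS"
  have "finite ?IS" by simp
  hence k: "k \<in> ?IS" "\<And>j. j \<in> ?IS \<Longrightarrow> j \<le> k"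
    unfolding k_def using \<open>Suc l \<in> ?IS\<close> Max_in Max_ge by blast+
  have "Suc l \<le> k" using k(2) \<open>Suc l \<in> ?IS\<close> .
  moreover have "k \<noteq> ?L - 1" using k(1) pd(2) A(2) by auto
  moreover have "p ! j \<notin> A \<union> S" if "k < j" "j < ?L" for j
    using that k(2)[of j] l(2)[of j] \<open>Suc l \<le> k\<close> by auto
  ultimately show ?thesis using k(1) by (intro exI[of _ k]) auto
qed

lemma kappa_le_reroute:
  assumes fV: "finite V" and A: "u \<in> A" "v \<in> A" "w \<notin> A \<union> S" "A \<inter> S = {}"
    and v: "v \<in> V" "\<And>s. s \<in> S \<Longrightarrow> E v s"
    and nb: "\<And>x y. x \<in> A \<Longrightarrow> y \<in> V \<Longrightarrow> E x y \<Longrightarrow> y \<in> A \<or> y \<in> S"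
  shows "kappa V E u w \<le> kappa V E v w"
proof (rule kappa_mono_map[OF fV fV])
  show "u \<noteq> w" "v \<noteq> w" using A by auto
  fix P assume P: "int_disjoint_paths V E u w P"
  have "\<exists>k. 0 < k \<and> k < length p - 1 \<and> p ! k \<in> S \<and> (\<forall>j. k < j \<longrightarrow> j < length p \<longrightarrow> p ! j \<notin> A \<union> S)"
    if "p \<in> P" for p
  proof -
    have "is_path V E u w p" using P that by (simp add: int_disjoint_paths_def)
    thus ?thesis by (rule path_last_boundary_vertex[OF _ A(1,3,4) nb])
  qed
  hence "\<exists>k. \<forall>p\<in>P. 0 < k p \<and> k p < length p - 1 \<and> p ! k p \<in> S \<and>
      (\<forall>j. k p < j \<longrightarrow> j < length p \<longrightarrow> p ! j \<notin> A \<union> S)"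
    by (rule bchoice[OF ballI])
  then obtain k where k: "\<And>p. p \<in> P \<Longrightarrow> 0 < k p \<and> k p < length p - 1 \<and> p ! k p \<in> S \<and>
      (\<forall>j. k p < j \<longrightarrow> j < length p \<longrightarrow> p ! j \<notin> A \<union> S)"
    by blast
  define g where "g p = v # drop (k p) p" for p
  have G: "is_path V E v w (g p)" "interior (g p) \<subseteq> interior p" "p ! k p \<in> interior (g p)"
    if p: "p \<in> P" for p
  proof -
    have pth: "is_path V E u w p" using P p by (simp add: int_disjoint_paths_def)
    have kp: "0 < k p" "k p < length p - 1" "p ! k p \<in> S" using k[OF p] by auto
    have "v \<notin> set (drop (k p) p)"
    proof
      assume "v \<in> set (drop (k p) p)"
      then obtain i where "i < length p - k p" "p ! (k p + i) = v" by (auto simp: in_set_conv_nth)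
      thus False using k[OF p] A(2,4) by (cases i) auto
    qed
    from is_path_reroute[OF pth kp(1,2) v(1) v(2)[OF kp(3)] this]
    show "is_path V E v w (g p)" "interior (g p) \<subseteq> interior p" "p ! k p \<in> interior (g p)"
      unfolding g_def by simp_all
  qed
  have "inj_on g P"
  proof (rule inj_onI)
    fix p q assume pq: "p \<in> P" "q \<in> P" "g p = g q"
    hence "interior p \<inter> interior q \<noteq> {}" using G(2,3)[OF pq(1)] G(2)[OF pq(2)] by auto
    thus "p = q" using P pq(1,2) unfolding int_disjoint_paths_def by blast
  qed
  moreover have "int_disjoint_paths V E v w (g ` P)"
    unfolding int_disjoint_paths_def
  proof (intro conjI ballI impI)
    fix p' assume "p' \<in> g ` P" thus "is_path V E v w p'" using G(1) by auto
  next
    fix p' q' assume pq': "p' \<in> g ` P" "q' \<in> g ` P" "p' \<noteq> q'"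
    then obtain p q where pq: "p \<in> P" "q \<in> P" "p \<noteq> q" "p' = g p" "q' = g q" by auto
    hence "interior p \<inter> interior q = {}" using P by (auto simp: int_disjoint_paths_def)
    thus "interior p' \<inter> interior q' = {}" using G(2)[OF pq(1)] G(2)[OF pq(2)] pq(4,5) by blast
  qed
  ultimately show "\<exists>P'. int_disjoint_paths V E v w P' \<and> card P' = card P" using card_image by blast
qed

lemma resolving_distinguishes:
  assumes "resolving V E W" "v1 \<in> V" "v2 \<in> V" "v1 \<noteq> v2"
  obtains w where "w \<in> W" "kappa V E v1 w \<noteq> kappa V E v2 w"
  using assms unfolding resolving_def by blast

lemma resolving_vertex_set: "resolving V E V"
  unfolding resolving_def
proof (intro conjI ballI impI subset_refl)
  fix v1 v2 assume "v1 \<in> V" "\<forall>w\<in>V. kappa V E v1 w = kappa V E v2 w"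
  hence "kappa V E v2 v1 = kappa V E v1 v1" by simp
  also have "\<dots> = \<infinity>" by (simp add: kappa_def)
  finally show "v1 = v2" using kappa_neq_infinity by metis
qed

lemma cdim_attained:
  assumes "finite V"
  obtains W where "resolving V E W" "finite W" "card W = cdim V E"
proof -
  let ?P = "\<lambda>k. \<exists>W. resolving V E W \<and> finite W \<and> card W = k"
  have "?P (card V)" using resolving_vertex_set assms by blast
  hence "?P (LEAST k. ?P k)" by (rule LeastI)
  thus ?thesis using that unfolding cdim_def by blast
qed

lemma resolving_twins:
  assumes "resolving V E W" "finite V" "a \<in> V" "b \<in> V" "a \<noteq> b"
    and "\<And>x y. E x y \<longleftrightarrow> E y x" "\<And>x. \<not> E x x" "\<And>z. z \<noteq> a \<Longrightarrow> z \<noteq> b \<Longrightarrow> E a z \<longleftrightarrow> E b z"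
  shows "a \<in> W \<or> b \<in> W"
proof (rule ccontr)
  assume "\<not> (a \<in> W \<or> b \<in> W)"
  hence "kappa V E a w = kappa V E b w" if "w \<in> W" for w
    using kappa_twins[of V a b E w] assms that by blast
  thus False using resolving_distinguishes[OF assms(1,3-5)] by blast
qed

lemma GE0_XX: "GE0 n cs (XV i a) (XV k b) \<longleftrightarrow> i = k \<and> i < n \<and>
   (a, b) \<in> {(1,2),(1,3),(1,4),(1,5),(2,3),(2,4),(2,5),(3,4),(3,5)}"
  unfolding GE0_def by auto

lemma GE0_CC: "GE0 n cs (CV j a) (CV k b) \<longleftrightarrow> j < length cs \<and> k < length cs \<and>
   ((j = k \<and> (a, b) \<in> {(3,4),(3,5),(4,5)} \<union> ({1,2,6} \<times> {3,4,5})) \<or>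
    (j \<noteq> k \<and> a \<in> {1,2} \<and> b \<in> {1,2}))"
  unfolding GE0_def by auto

lemma GE0_CX: "GE0 n cs (CV j a) (XV i b) \<longleftrightarrow> j < length cs \<and> i < n \<and>
   (((i, True) \<in> cs ! j \<and> (a, b) \<in> {(1,1),(2,1),(2,2)}) \<or>
    ((i, False) \<in> cs ! j \<and> (a, b) \<in> {(1,1),(1,2),(2,2)}))"
  unfolding GE0_def by auto

lemma GE0_XC: "\<not> GE0 n cs (XV i b) (CV j a)"
  unfolding GE0_def by auto

lemma GE_XX: "GE n cs (XV i a) (XV k b) \<longleftrightarrow>
   (i = k \<and> i < n \<and> (a, b) \<in> {(1,2),(1,3),(1,4),(1,5),(2,3),(2,4),(2,5),(3,4),(3,5)}) \<or>
   (k = i \<and> k < n \<and> (b, a) \<in> {(1,2),(1,3),(1,4),(1,5),(2,3),(2,4),(2,5),(3,4),(3,5)})"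
  unfolding GE_def GE0_XX by (rule refl)

lemma GE_CC: "GE n cs (CV j a) (CV k b) \<longleftrightarrow>
   (j < length cs \<and> k < length cs \<and>
   ((j = k \<and> (a, b) \<in> {(3,4),(3,5),(4,5)} \<union> ({1,2,6} \<times> {3,4,5})) \<or>
    (j \<noteq> k \<and> a \<in> {1,2} \<and> b \<in> {1,2}))) \<or>
   (k < length cs \<and> j < length cs \<and>
   ((k = j \<and> (b, a) \<in> {(3,4),(3,5),(4,5)} \<union> ({1,2,6} \<times> {3,4,5})) \<or>
    (k \<noteq> j \<and> b \<in> {1,2} \<and> a \<in> {1,2})))"
  unfolding GE_def GE0_CC by (rule refl)

lemma GE_CX: "GE n cs (CV j a) (XV i b) \<longleftrightarrow> j < length cs \<and> i < n \<and>
   (((i, True) \<in> cs ! j \<and> (a, b) \<in> {(1,1),(2,1),(2,2)}) \<or>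
    ((i, False) \<in> cs ! j \<and> (a, b) \<in> {(1,1),(1,2),(2,2)}))"
  unfolding GE_def GE0_CX by (simp only: GE0_XC simp_thms)

lemma GE_XC: "GE n cs (XV i b) (CV j a) \<longleftrightarrow> j < length cs \<and> i < n \<and>
   (((i, True) \<in> cs ! j \<and> (a, b) \<in> {(1,1),(2,1),(2,2)}) \<or>
    ((i, False) \<in> cs ! j \<and> (a, b) \<in> {(1,1),(1,2),(2,2)}))"
  unfolding GE_def GE0_CX by (simp only: GE0_XC simp_thms)

lemmas GE_simps = GE_XX GE_CC GE_CX GE_XC

lemma GE_sym: "GE n cs x y \<longleftrightarrow> GE n cs y x"
  unfolding GE_def by auto

lemma GV_XV: "XV i a \<in> GV n cs \<longleftrightarrow> i < n \<and> a \<in> {1,2,3,4,5}"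
  unfolding GV_def by auto

lemma GV_CV: "CV j a \<in> GV n cs \<longleftrightarrow> j < length cs \<and> a \<in> {1,2,3,4,5,6}"
  unfolding GV_def by auto

lemmas GV_simps = GV_XV GV_CV

lemma GE_irrefl: "\<not> GE n cs x x"
  by (cases x) (auto simp: GE_simps)

lemma GE_in_GV: "GE n cs x y \<Longrightarrow> x \<in> GV n cs"
  by (cases x; cases y) (auto simp: GE_simps GV_simps)

lemma finite_GV: "finite (GV n cs)"
proof -
  have "GV n cs \<subseteq> case_prod XV ` ({..<n} \<times> {1..5}) \<union> case_prod CV ` ({..<length cs} \<times> {1..6})"
    unfolding GV_def by auto
  thus ?thesis by (rule finite_subset) auto
qed

definition negate_literals :: "clause list \<Rightarrow> clause list" where
  "negate_literals cs = map (image (map_prod id Not)) cs"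

text \<open>Exchanging the indices 1 and 2 in every gadget turns the edges of a positive occurrence
  into those of a negative one.\<close>
fun mirror :: "gvert \<Rightarrow> gvert" where
  "mirror (XV i a) = XV i (transpose 1 2 a)"
| "mirror (CV j a) = CV j (transpose 1 2 a)"

lemma mirror_mirror [simp]: "mirror (mirror x) = x"
  by (cases x) (simp_all add: transpose_def)

lemma length_negate_literals [simp]: "length (negate_literals cs) = length cs"
  by (simp add: negate_literals_def)

lemma negate_literals_nth:
  "j < length cs \<Longrightarrow> (i, b) \<in> negate_literals cs ! j \<longleftrightarrow> (i, \<not> b) \<in> cs ! j"
  by (force simp: negate_literals_def)

lemma mirror_in_GV: "mirror x \<in> GV n (negate_literals cs) \<longleftrightarrow> x \<in> GV n cs"
  by (cases x) (auto simp: GV_simps negate_literals_def transpose_def)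

lemma sat3_instance_negate_literals:
  assumes "sat3_instance n cs" shows "sat3_instance n (negate_literals cs)"
  unfolding sat3_instance_def
proof (intro conjI)
  show "\<forall>D\<in>set (negate_literals cs). D \<noteq> {} \<and> card D \<le> 3 \<and> finite D \<and> (\<forall>(i, b)\<in>D. i < n) \<and>
          (\<forall>(i, b)\<in>D. \<forall>(i', b')\<in>D. i = i' \<longrightarrow> b = b')"
  proof
    fix D assume "D \<in> set (negate_literals cs)"
    then obtain C where C: "C \<in> set cs" and D: "D = map_prod id Not ` C"
      by (auto simp: negate_literals_def)
    have "inj (map_prod id Not :: literal \<Rightarrow> literal)" by (auto intro: injI)
    hence "card D = card C" unfolding D by (metis card_image inj_on_subset subset_UNIV)
    moreover have "(\<forall>(i, b)\<in>D. i < n) \<and> (\<forall>(i, b)\<in>D. \<forall>(i', b')\<in>D. i = i' \<longrightarrow> b = b')"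
      using assms C unfolding D sat3_instance_def by fastforce
    ultimately show "D \<noteq> {} \<and> card D \<le> 3 \<and> finite D \<and> (\<forall>(i, b)\<in>D. i < n) \<and>
          (\<forall>(i, b)\<in>D. \<forall>(i', b')\<in>D. i = i' \<longrightarrow> b = b')"
      using assms C unfolding D sat3_instance_def by simp
  qed
  show "\<forall>i<n. \<exists>D\<in>set (negate_literals cs). \<exists>b. (i, b) \<in> D"
  proof (intro allI impI)
    fix i assume "i < n"
    then obtain C b where "C \<in> set cs" "(i, b) \<in> C" using assms by (auto simp: sat3_instance_def)
    moreover have "(i, \<not> b) \<in> map_prod id Not ` C" using \<open>(i, b) \<in> C\<close> by force
    ultimately show "\<exists>D\<in>set (negate_literals cs). \<exists>b. (i, b) \<in> D"
      by (auto simp: negate_literals_def)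
  qed
qed

lemma GE_mirror: "GE n (negate_literals cs) (mirror x) (mirror y) \<longleftrightarrow> GE n cs x y"
proof (cases x; cases y)
  fix i a k b assume "x = XV i a" "y = XV k b"
  thus ?thesis by (cases "a = 1"; cases "a = 2"; cases "b = 1"; cases "b = 2") (auto simp: GE_simps)
next
  fix i a k b assume "x = CV i a" "y = CV k b"
  thus ?thesis by (cases "a = 1"; cases "a = 2"; cases "b = 1"; cases "b = 2") (simp_all add: GE_simps)
next
  fix i a k b assume "x = CV i a" "y = XV k b"
  thus ?thesis
    by (cases "i < length cs"; cases "a = 1"; cases "a = 2"; cases "b = 1"; cases "b = 2")
      (simp_all add: GE_simps negate_literals_nth, blast+)
next
  fix i a k b assume "x = XV i a" "y = CV k b"
  thus ?thesis
    by (cases "k < length cs"; cases "a = 1"; cases "a = 2"; cases "b = 1"; cases "b = 2")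
      (simp_all add: GE_simps negate_literals_nth, blast+)
qed

lemma kappa_mirror:
  "kappa (GV n (negate_literals cs)) (GE n (negate_literals cs)) (mirror x) (mirror y) =
   kappa (GV n cs) (GE n cs) x y"
  by (rule kappa_involution) (simp_all add: finite_GV mirror_in_GV GE_mirror)

lemma GE_CV3_iff: "GE n cs x (CV j 3) \<longleftrightarrow> j < length cs \<and> x \<in> {CV j 1, CV j 2, CV j 4, CV j 5, CV j 6}"
  by (cases x) (auto simp: GE_simps)

lemma GE_CV4_iff: "GE n cs x (CV j 4) \<longleftrightarrow> j < length cs \<and> x \<in> {CV j 1, CV j 2, CV j 3, CV j 5, CV j 6}"
  by (cases x) (auto simp: GE_simps)

lemma GE_CV5_iff: "GE n cs x (CV j 5) \<longleftrightarrow> j < length cs \<and> x \<in> {CV j 1, CV j 2, CV j 3, CV j 4, CV j 6}"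
  by (cases x) (auto simp: GE_simps)

lemma GE_CV_core_iff: "c \<in> {3,4,5} \<Longrightarrow>
  GE n cs x (CV j c) \<longleftrightarrow> j < length cs \<and> x \<in> {CV j 1, CV j 2, CV j 3, CV j 4, CV j 5, CV j 6} - {CV j c}"
  by (elim insertE emptyE) (auto simp: GE_CV3_iff GE_CV4_iff GE_CV5_iff)

lemma GE_CV6_iff: "GE n cs x (CV j 6) \<longleftrightarrow> j < length cs \<and> x \<in> {CV j 3, CV j 4, CV j 5}"
  by (cases x) (auto simp: GE_simps)

lemma GE_XV3_iff: "GE n cs x (XV i 3) \<longleftrightarrow> i < n \<and> x \<in> {XV i 1, XV i 2, XV i 4, XV i 5}"
  by (cases x) (auto simp: GE_simps)

lemma GE_XV45_iff: "c \<in> {4,5} \<Longrightarrow> GE n cs x (XV i c) \<longleftrightarrow> i < n \<and> x \<in> {XV i 1, XV i 2, XV i 3}"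
  by (cases x) (auto simp: GE_simps)

lemma GE_hub_literal:
  "j < length cs \<Longrightarrow> (i, s) \<in> cs ! j \<Longrightarrow> i < n \<Longrightarrow> b \<in> {1,2} \<Longrightarrow>
   GE n cs (CV j b) (XV i (if s then 1 else 2)) \<and> GE n cs (CV j b) (XV i b)"
  by (cases s) (auto simp: GE_CX)

lemma GE_clause_hub_core: "j < length cs \<Longrightarrow> c \<in> {1,2,6} \<Longrightarrow> a \<in> {3,4,5} \<Longrightarrow> GE n cs (CV j c) (CV j a)"
  by (simp add: GE_CC) (elim disjE; simp)

lemma GE_clause_core_core:
  "j < length cs \<Longrightarrow> a \<in> {3,4,5} \<Longrightarrow> a' \<in> {3,4,5} \<Longrightarrow> a \<noteq> a' \<Longrightarrow> GE n cs (CV j a) (CV j a')"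
  by (simp add: GE_CC) (elim disjE; simp)

lemma GE_hub_hub:
  "j \<noteq> k \<Longrightarrow> j < length cs \<Longrightarrow> k < length cs \<Longrightarrow> b \<in> {1,2} \<Longrightarrow> b' \<in> {1,2} \<Longrightarrow> GE n cs (CV j b) (CV k b')"
  by (simp add: GE_CC)

lemma GE_clause_core_twins:
  assumes "a \<in> {3,4,5}" "a' \<in> {3,4,5}" "z \<noteq> CV j a" "z \<noteq> CV j a'"
  shows "GE n cs (CV j a) z \<longleftrightarrow> GE n cs (CV j a') z"
  using assms GE_CV_core_iff[OF assms(1), of n cs z j] GE_CV_core_iff[OF assms(2), of n cs z j]
  by (simp add: GE_sym[of n cs "CV j a"] GE_sym[of n cs "CV j a'"])

lemma GE_var_twins: "z \<noteq> XV i 4 \<Longrightarrow> z \<noteq> XV i 5 \<Longrightarrow> GE n cs (XV i 4) z \<longleftrightarrow> GE n cs (XV i 5) z"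
  by (simp add: GE_sym[of n cs "XV i 4"] GE_sym[of n cs "XV i 5"] GE_XV45_iff)

definition var_gadget :: "nat \<Rightarrow> gvert set" where
  "var_gadget i = {XV i 1, XV i 2, XV i 3, XV i 4, XV i 5}"

definition clause_gadget :: "nat \<Rightarrow> gvert set" where
  "clause_gadget j = {CV j 1, CV j 2, CV j 3, CV j 4, CV j 5, CV j 6}"

definition clause_neighbours :: "nat \<Rightarrow> clause list \<Rightarrow> gvert \<Rightarrow> gvert set" where
  "clause_neighbours n cs w = {x. (\<exists>k c. x = CV k c) \<and> GE n cs x w}"

lemma finite_clause_neighbours: "finite (clause_neighbours n cs w)"
proof -
  have "clause_neighbours n cs w \<subseteq> GV n cs" using GE_in_GV by (auto simp: clause_neighbours_def)
  thus ?thesis using finite_GV by (rule finite_subset)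
qed

lemma CV_in_clause_neighbours: "CV k c \<in> clause_neighbours n cs w \<longleftrightarrow> GE n cs (CV k c) w"
  by (simp add: clause_neighbours_def)

lemma XV_notin_clause_neighbours: "XV i c \<notin> clause_neighbours n cs w"
  by (simp add: clause_neighbours_def)

section \<open>Local connectivities in G(S)\<close>

lemma kappa_hub_other_core:
  assumes "j \<noteq> k" "j < length cs" "k < length cs" "b \<in> {1,2}" "a \<in> {3,4,5}"
  shows "kappa (GV n cs) (GE n cs) (CV j b) (CV k a) = 2"
proof -
  let ?S = "{CV k 1, CV k 2}"
  have "separates (GV n cs) (GE n cs) ?S {CV k 3, CV k 4, CV k 5, CV k 6} (CV j b) (CV k a)"
  proof (rule separatesI)
    fix x y assume xy: "GE n cs x y" "x \<notin> {CV k 3, CV k 4, CV k 5, CV k 6}"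
      and "y \<in> {CV k 3, CV k 4, CV k 5, CV k 6}"
    hence "y = CV k 3 \<or> y = CV k 4 \<or> y = CV k 5 \<or> y = CV k 6" by simp
    thus "x \<in> ?S \<or> y \<in> ?S \<or> (x = CV j b \<and> y = CV k a)"
      using xy by (auto simp: GE_CV3_iff GE_CV4_iff GE_CV5_iff GE_CV6_iff)
  qed (use assms in auto)
  hence "kappa (GV n cs) (GE n cs) (CV j b) (CV k a) = card ?S + (if GE n cs (CV j b) (CV k a) then 1 else 0)"
    by (rule kappa_common_neighbours[OF finite_GV finite.insertI[OF finite.insertI[OF finite.emptyI]]])
      (use assms in \<open>auto simp: GE_CC GV_simps\<close>)
  thus ?thesis using assms by (auto simp: GE_CC numeral_eq_enat)
qed

lemma kappa_hub_own_core_le: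
  assumes j: "j < length cs" and b: "b \<in> {1,2}" and a: "a \<in> {3,4,5}"
  shows "kappa (GV n cs) (GE n cs) (CV j b) (CV j a) \<le> 4"
proof -
  let ?v = "CV j b" and ?w = "CV j a"
  have "card ({1,2} - {b}) = 1" using b by auto
  then obtain b' where b': "{1,2} - {b} = {b'}" by (rule card_1_singletonE)
  have "card ({3,4,5} - {a}) = 2" using a by auto
  then obtain a' a'' where a': "{3,4,5} - {a} = {a', a''}" "a' \<noteq> a''" by (auto simp: card_2_iff)
  have ne: "a' \<in> {3,4,5}" "a'' \<in> {3,4,5}" "a' \<noteq> a" "a'' \<noteq> a" "b' \<in> {1,2}" "b' \<noteq> b"
    using a' b' by blast+
  have hub: "c = b \<or> c = b'" if "c \<in> {1,2}" for c using that b' by blast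
  have core: "c = a' \<or> c = a''" if "c \<in> {3,4,5}" "c \<noteq> a" for c using that a'(1) by blast
  let ?S = "{CV j b', CV j a', CV j a''}"
  have "separates (GV n cs) (GE n cs) ?S {?w, CV j 6} ?v ?w"
  proof (rule separatesI)
    fix x y assume xy: "GE n cs x y" "x \<notin> {?w, CV j 6}" and "y \<in> {?w, CV j 6}"
    hence "y = ?w \<or> y = CV j 6" by simp
    thus "x \<in> ?S \<or> y \<in> ?S \<or> (x = ?v \<and> y = ?w)"
    proof
      assume y: "y = ?w"
      hence "x \<in> {CV j 1, CV j 2, CV j 3, CV j 4, CV j 5, CV j 6} - {CV j a}"
        using xy(1) GE_CV_core_iff[OF a] by simp
      then obtain c where c: "x = CV j c" "c \<in> {1,2,3,4,5,6}" "c \<noteq> a" by auto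
      moreover have "c \<noteq> 6" using c xy(2) by auto
      ultimately have "c \<in> {1,2} \<or> c \<in> {3,4,5}" by auto
      thus ?thesis using hub core c y by auto
    next
      assume "y = CV j 6"
      hence "x \<in> {CV j 3, CV j 4, CV j 5}" using xy(1) by (simp add: GE_CV6_iff)
      then obtain c where c: "x = CV j c" "c \<in> {3,4,5}" by auto
      thus ?thesis using core[of c] xy(2) by auto
    qed
  qed (use a b ne in auto)
  hence "kappa (GV n cs) (GE n cs) ?v ?w \<le> card ?S + (if GE n cs ?v ?w then 1 else 0)"
    by (rule kappa_le_separator[OF finite_GV, rotated]) simp
  moreover have "card ?S + (if GE n cs ?v ?w then 1 else 0) \<le> 4"
    using ne a'(2) by auto
  ultimately have "kappa (GV n cs) (GE n cs) ?v ?w \<le> enat 4" by (meson enat_ord_simps(1) order_trans)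
  thus ?thesis by (simp add: numeral_eq_enat)
qed

lemma kappa_hub_var_core_le:
  assumes a: "a \<in> {3,4,5}"
  shows "kappa (GV n cs) (GE n cs) (CV j b) (XV i a) \<le> 2"
proof -
  let ?v = "CV j b" and ?w = "XV i a" and ?S = "{XV i 1, XV i 2}"
  have "separates (GV n cs) (GE n cs) ?S {XV i 3, XV i 4, XV i 5} ?v ?w"
  proof (rule separatesI)
    fix x y assume xy: "GE n cs x y" "x \<notin> {XV i 3, XV i 4, XV i 5}" "y \<in> {XV i 3, XV i 4, XV i 5}"
    hence "y = XV i 3 \<or> y \<in> {XV i 4, XV i 5}" by simp
    thus "x \<in> ?S \<or> y \<in> ?S \<or> (x = ?v \<and> y = ?w)"
      using xy(1,2) GE_XV45_iff[of 4 n cs x i] GE_XV45_iff[of 5 n cs x i] by (auto simp: GE_XV3_iff)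
  qed (use a in auto)
  hence "kappa (GV n cs) (GE n cs) ?v ?w \<le> card ?S + (if GE n cs ?v ?w then 1 else 0)"
    by (rule kappa_le_separator[OF finite_GV, rotated]) simp
  moreover have "\<not> GE n cs ?v ?w" using a by (auto simp: GE_CX)
  ultimately show ?thesis by (simp add: numeral_eq_enat numeral_2_eq_2)
qed

lemma kappa_var_core_twin:
  assumes "i < n" "t \<in> {4,5}" "a \<in> {3,4,5}" "a \<noteq> t"
  shows "kappa (GV n cs) (GE n cs) (XV i a) (XV i t) = 3"
proof -
  let ?S = "{XV i 1, XV i 2, XV i 3} - {XV i a}"
  have at: "(a = 3 \<and> t = 4) \<or> (a = 3 \<and> t = 5) \<or> (a = 5 \<and> t = 4) \<or> (a = 4 \<and> t = 5)"
    using assms(2-4) by auto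
  have sep: "separates (GV n cs) (GE n cs) ?S {XV i t} (XV i a) (XV i t)"
  proof (rule separatesI)
    fix x y assume "GE n cs x y" "x \<notin> {XV i t}" "y \<in> {XV i t}"
    hence "x \<in> {XV i 1, XV i 2, XV i 3}" using GE_XV45_iff[OF assms(2)] by auto
    thus "x \<in> ?S \<or> y \<in> ?S \<or> (x = XV i a \<and> y = XV i t)" using \<open>y \<in> {XV i t}\<close> by auto
  qed (use assms(2-4) in auto)
  have "GE n cs (XV i a) s \<and> GE n cs s (XV i t)" if "s \<in> ?S" for s
    using at that assms(1) by (elim disjE) (auto simp: GE_XX)
  moreover have "XV i a \<in> GV n cs" "XV i t \<in> GV n cs" "?S \<subseteq> GV n cs"
    using assms(1-3) by (auto simp: GV_simps)
  ultimately have "kappa (GV n cs) (GE n cs) (XV i a) (XV i t) =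
      card ?S + (if GE n cs (XV i a) (XV i t) then 1 else 0)"
    using kappa_common_neighbours[OF finite_GV _ sep] by simp
  also have "card ?S + (if GE n cs (XV i a) (XV i t) then 1 else 0) = 3"
    using at assms(1) by (elim disjE) (simp_all add: GE_XX)
  finally show ?thesis by (simp add: numeral_eq_enat)
qed

lemma kappa_var_core_outside:
  assumes "i < n" "u \<in> {XV i 3, XV i 4, XV i 5}" "v \<in> {XV i 3, XV i 4, XV i 5}" "w \<notin> var_gadget i"
  shows "kappa (GV n cs) (GE n cs) u w = kappa (GV n cs) (GE n cs) v w"
proof -
  have "kappa (GV n cs) (GE n cs) u w \<le> kappa (GV n cs) (GE n cs) v w"
    if "u \<in> {XV i 3, XV i 4, XV i 5}" "v \<in> {XV i 3, XV i 4, XV i 5}" for u v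
  proof (rule kappa_le_reroute[OF finite_GV that, where S = "{XV i 1, XV i 2}"])
    fix x y assume "x \<in> {XV i 3, XV i 4, XV i 5}" "GE n cs x y"
    thus "y \<in> {XV i 3, XV i 4, XV i 5} \<or> y \<in> {XV i 1, XV i 2}"
      by (auto simp: GE_sym[of n cs x] GE_XV3_iff GE_XV45_iff)
  qed (use assms that in \<open>auto simp: var_gadget_def GV_simps GE_XX\<close>)
  thus ?thesis using assms(2,3) by (metis order_antisym)
qed

lemma path_via_other_clause:
  assumes t: "t \<in> clause_neighbours n cs (XV i 1) - clause_gadget j" and "j < length cs" "b \<in> {1,2}"
  shows "is_path (GV n cs) (GE n cs) (CV j b) (XV i 1) [CV j b, t, XV i 1]"
proof -
  obtain k c where tkc: "t = CV k c" using t by (auto simp: clause_neighbours_def)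
  have "GE n cs (CV k c) (XV i 1)" using t tkc by (simp add: CV_in_clause_neighbours)
  hence kc: "k < length cs" "i < n" "c \<in> {1,2}" by (auto simp: GE_CX)
  hence "k \<noteq> j" using t tkc by (auto simp: clause_gadget_def)
  hence "GE n cs (CV j b) (CV k c)" using kc assms(2,3) by (simp add: GE_CC)
  thus ?thesis using \<open>GE n cs (CV k c) (XV i 1)\<close> kc assms(2,3) tkc \<open>k \<noteq> j\<close>
    by (auto simp: is_path_Cons_Cons is_path_singleton GV_simps)
qed

lemma card_clause_neighbours_remove:
  "card (clause_neighbours n cs w - {CV j b}) + (if GE n cs (CV j b) w then 1 else 0) =
   card (clause_neighbours n cs w)"
  using card.remove[OF finite_clause_neighbours, of "CV j b" n cs w]
  by (auto simp: CV_in_clause_neighbours[symmetric])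

lemma clause_vertex_adjacent_XV:
  "GE n cs (CV k c) w \<Longrightarrow> CV k c \<in> clause_neighbours n cs w - {CV j b} \<or> CV k c = CV j b"
  by (auto simp: CV_in_clause_neighbours)

text \<open>Every clause vertex reaches x_i^1 through a clause neighbour of x_i^1 or through x_i^2.\<close>
lemma kappa_hub_X1_le_Suc:
  "kappa (GV n cs) (GE n cs) (CV j b) (XV i 1) \<le> card (clause_neighbours n cs (XV i 1)) + 1"
proof -
  let ?N = "clause_neighbours n cs (XV i 1)" and ?v = "CV j b" and ?w = "XV i 1"
  let ?S = "insert (XV i 2) (?N - {?v})"
  have "separates (GV n cs) (GE n cs) ?S {XV i 1, XV i 3, XV i 4, XV i 5} ?v ?w"
  proof (rule separatesI)
    fix x y assume xy: "GE n cs x y" "x \<notin> {XV i 1, XV i 3, XV i 4, XV i 5}"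
      and "y \<in> {XV i 1, XV i 3, XV i 4, XV i 5}"
    hence "y = XV i 1 \<or> y = XV i 3 \<or> y = XV i 4 \<or> y = XV i 5" by simp
    thus "x \<in> ?S \<or> y \<in> ?S \<or> (x = ?v \<and> y = ?w)"
    proof (elim disjE)
      assume y: "y = XV i 1"
      show ?thesis
      proof (cases x)
        case (CV k c) thus ?thesis using clause_vertex_adjacent_XV xy y by blast
      next
        case (XV i' c) thus ?thesis using xy y by (auto simp: GE_XX)
      qed
    qed (use xy in \<open>auto simp: GE_XV3_iff GE_XV45_iff\<close>)
  qed (auto simp: XV_notin_clause_neighbours)
  hence "kappa (GV n cs) (GE n cs) ?v ?w \<le> card ?S + (if GE n cs ?v ?w then 1 else 0)"
    by (rule kappa_le_separator[OF finite_GV, rotated]) (simp add: finite_clause_neighbours)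
  thus ?thesis using card_clause_neighbours_remove[of n cs ?w j b] finite_clause_neighbours
    by (simp add: XV_notin_clause_neighbours)
qed

text \<open>Without negative occurrences of X_i, every clause neighbour of x_i^2 is also one of x_i^1,
  so these cut off the whole variable gadget.\<close>
lemma kappa_hub_X1_le_card:
  assumes i: "i < n" and pos: "(i, True) \<notin> cs ! j" and "\<forall>k < length cs. (i, False) \<notin> cs ! k"
  shows "kappa (GV n cs) (GE n cs) (CV j b) (XV i 1) \<le> card (clause_neighbours n cs (XV i 1))"
proof -
  let ?N = "clause_neighbours n cs (XV i 1)" and ?v = "CV j b" and ?w = "XV i 1"
  have "separates (GV n cs) (GE n cs) (?N - {?v}) (var_gadget i) ?v ?w"
  proof (rule separatesI)
    fix x y assume xy: "GE n cs x y" "x \<notin> var_gadget i" "y \<in> var_gadget i"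
    then obtain k c where x: "x = CV k c" by (cases x) (auto simp: GE_XX var_gadget_def)
    from xy(3) have "y = XV i 1 \<or> y = XV i 2 \<or> y = XV i 3 \<or> y = XV i 4 \<or> y = XV i 5"
      by (simp add: var_gadget_def)
    thus "x \<in> ?N - {?v} \<or> y \<in> ?N - {?v} \<or> (x = ?v \<and> y = ?w)"
    proof (elim disjE)
      assume "y = XV i 1" thus ?thesis using clause_vertex_adjacent_XV xy x by blast
    next
      assume "y = XV i 2"
      hence "c = 2 \<and> k < length cs \<and> (i, True) \<in> cs ! k" using xy x assms(3) by (auto simp: GE_CX)
      thus ?thesis using x pos by (auto simp: CV_in_clause_neighbours GE_CX i)
    qed (use xy x in \<open>auto simp: GE_CX\<close>)
  qed (auto simp: var_gadget_def XV_notin_clause_neighbours)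
  hence "kappa (GV n cs) (GE n cs) ?v ?w \<le> card (?N - {?v}) + (if GE n cs ?v ?w then 1 else 0)"
    by (rule kappa_le_separator[OF finite_GV, rotated]) (simp add: finite_clause_neighbours)
  thus ?thesis using card_clause_neighbours_remove[of n cs ?w j b] by simp
qed

context
  fixes n :: nat and cs :: "clause list"
  assumes inst: "sat3_instance n cs"
begin

lemma literal_var_less: "j < length cs \<Longrightarrow> (i, s) \<in> cs ! j \<Longrightarrow> i < n"
  using inst unfolding sat3_instance_def by (fastforce dest: nth_mem)

lemma clause_consistent: "j < length cs \<Longrightarrow> (i, True) \<in> cs ! j \<Longrightarrow> (i, False) \<notin> cs ! j"
  using inst unfolding sat3_instance_def by (fastforce dest: nth_mem)

lemma clause_has_literal: "j < length cs \<Longrightarrow> \<exists>i s. (i, s) \<in> cs ! j"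
  using inst unfolding sat3_instance_def by (fastforce dest: nth_mem)

lemma var_occurs: "i < n \<Longrightarrow> \<exists>k s. k < length cs \<and> (i, s) \<in> cs ! k"
  using inst unfolding sat3_instance_def by (fastforce simp: in_set_conv_nth)

lemma kappa_hub_own_core_ge:
  assumes j: "j < length cs" and b: "b \<in> {1,2}" and a: "a \<in> {3,4,5}"
  shows "4 \<le> kappa (GV n cs) (GE n cs) (CV j b) (CV j a)"
proof -
  let ?v = "CV j b" and ?w = "CV j a"
  have "card ({1,2} - {b}) = 1" using b by auto
  then obtain b' where b': "{1,2} - {b} = {b'}" by (rule card_1_singletonE)
  have "card ({3,4,5} - {a}) = 2" using a by auto
  then obtain a' a'' where a': "{3,4,5} - {a} = {a', a''}" "a' \<noteq> a''" by (auto simp: card_2_iff)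
  have ne: "a' \<in> {3,4,5}" "a'' \<in> {3,4,5}" "a' \<noteq> a" "a'' \<noteq> a" "b' \<in> {1,2}" "b' \<noteq> b"
    using a' b' by blast+
  obtain l s where ls: "(l, s) \<in> cs ! j" using clause_has_literal[OF j] by blast
  let ?z = "XV l (if s then 1 else 2)"
  have z: "GE n cs ?v ?z" "GE n cs ?z (CV j b')" "?z \<in> GV n cs"
    using GE_hub_literal[OF j ls literal_var_less[OF j ls]] b ne(5) GE_sym[of n cs ?z]
      literal_var_less[OF j ls] by (auto simp: GV_simps)
  have inV: "?v \<in> GV n cs" "?w \<in> GV n cs" "CV j b' \<in> GV n cs" "CV j a' \<in> GV n cs" "CV j a'' \<in> GV n cs"
    using j a b ne by (auto simp: GV_simps)
  have E: "GE n cs ?v ?w" "GE n cs ?v (CV j a')" "GE n cs ?v (CV j a'')"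
    "GE n cs (CV j a') ?w" "GE n cs (CV j a'') ?w" "GE n cs (CV j b') ?w"
    using GE_clause_hub_core[OF j] GE_clause_core_core[OF j] a b ne by auto
  let ?T = "{CV j a', CV j a''}"
  let ?Q = "{[?v, ?w], [?v, ?z, CV j b', ?w]}"
  have "enat (card ?T + card ?Q) \<le> kappa (GV n cs) (GE n cs) ?v ?w"
  proof (rule kappa_ge_fan[OF finite_GV])
    show "is_path (GV n cs) (GE n cs) ?v ?w [?v, c, ?w]" if "c \<in> ?T" for c
      using that inV E ne a b by (auto simp: is_path_Cons_Cons is_path_singleton)
    show "is_path (GV n cs) (GE n cs) ?v ?w q" if "q \<in> ?Q" for q
      using that inV E z ne a b by (auto simp: is_path_Cons_Cons is_path_singleton)
  qed (use ne a b in \<open>auto simp: interior_simps\<close>)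
  moreover have "card ?T + card ?Q = 4" using a'(2) by simp
  ultimately show ?thesis by (simp add: numeral_eq_enat)
qed

lemma kappa_hub_own_core:
  assumes "j < length cs" "b \<in> {1,2}" "a \<in> {3,4,5}"
  shows "kappa (GV n cs) (GE n cs) (CV j b) (CV j a) = 4"
  using kappa_hub_own_core_le[OF assms] kappa_hub_own_core_ge[OF assms] by (rule order_antisym)

lemma hub_var_core_paths:
  assumes j: "j < length cs" and i: "i < n" and b: "b \<in> {1,2}" and a: "a \<in> {3,4,5}"
  obtains Q where "card Q = 2" "\<forall>q\<in>Q. is_path (GV n cs) (GE n cs) (CV j b) (XV i a) q"
    "\<forall>q\<in>Q. \<forall>q'\<in>Q. q \<noteq> q' \<longrightarrow> interior q \<inter> interior q' = {}"
proof -
  let ?v = "CV j b" and ?w = "XV i a"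
  have b': "3 - b \<in> {1,2}" "3 - b \<noteq> b" using b by auto
  have core: "GE n cs (XV i c) ?w" "XV i c \<in> GV n cs" if "c \<in> {1,2}" for c
    using that a i by (auto simp: GE_XX GV_simps)
  have ne: "b \<noteq> a" "3 - b \<noteq> a" "b \<noteq> 3" "3 - b \<noteq> 3" "1 \<noteq> a" "2 \<noteq> a" using a b by auto
  have inV: "?v \<in> GV n cs" "?w \<in> GV n cs" using i j a b by (auto simp: GV_simps)
  show thesis
  proof (cases "\<exists>s. (i, s) \<in> cs ! j")
    case True
    then obtain s where s: "(i, s) \<in> cs ! j" by blast
    have E: "GE n cs ?v (XV i b)" "GE n cs (CV j (3 - b)) (XV i (3 - b))"
      using GE_hub_literal[OF j s i] b b' by auto
    have E3: "GE n cs ?v (CV j 3)" "GE n cs (CV j 3) (CV j (3 - b))"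
      using GE_clause_hub_core[OF j, of b 3] GE_clause_hub_core[OF j, of "3 - b" 3] b b'
      by (auto simp: GE_sym[of n cs "CV j 3"])
    have inV': "CV j 3 \<in> GV n cs" "CV j (3 - b) \<in> GV n cs" using j b' by (auto simp: GV_simps)
    show thesis
    proof (rule that[of "{[?v, XV i b, ?w], [?v, CV j 3, CV j (3 - b), XV i (3 - b), ?w]}"])
      show "\<forall>q\<in>{[?v, XV i b, ?w], [?v, CV j 3, CV j (3 - b), XV i (3 - b), ?w]}.
          is_path (GV n cs) (GE n cs) ?v ?w q"
        using E E3 inV inV' core[OF b] core[OF b'(1)] ne b'(2)
        by (auto simp: is_path_Cons_Cons is_path_singleton)
    qed (use b b' in \<open>auto simp: interior_def\<close>)
  next
    case False
    obtain k s where ks: "k < length cs" "(i, s) \<in> cs ! k" using var_occurs[OF i] by blast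
    have kj: "k \<noteq> j" using False ks by blast
    have E: "GE n cs (CV k 1) (XV i 1)" "GE n cs (CV k 2) (XV i 2)"
      using GE_hub_literal[OF ks i] by auto
    have E2: "GE n cs ?v (CV k 1)" "GE n cs ?v (CV k 2)" using GE_hub_hub[OF kj[symmetric] j ks(1) b] by auto
    have inV': "CV k 1 \<in> GV n cs" "CV k 2 \<in> GV n cs" using ks by (auto simp: GV_simps)
    show thesis
    proof (rule that[of "{[?v, CV k 1, XV i 1, ?w], [?v, CV k 2, XV i 2, ?w]}"])
      show "\<forall>q\<in>{[?v, CV k 1, XV i 1, ?w], [?v, CV k 2, XV i 2, ?w]}. is_path (GV n cs) (GE n cs) ?v ?w q"
        using E E2 inV inV' core[of 1] core[of 2] kj ne by (auto simp: is_path_Cons_Cons is_path_singleton)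
    qed (auto simp: interior_simps)
  qed
qed

lemma kappa_hub_var_core_ge:
  assumes "j < length cs" "i < n" "b \<in> {1,2}" "a \<in> {3,4,5}"
  shows "2 \<le> kappa (GV n cs) (GE n cs) (CV j b) (XV i a)"
proof -
  obtain Q where Q: "card Q = 2" "\<forall>q\<in>Q. is_path (GV n cs) (GE n cs) (CV j b) (XV i a) q"
    "\<forall>q\<in>Q. \<forall>q'\<in>Q. q \<noteq> q' \<longrightarrow> interior q \<inter> interior q' = {}"
    by (rule hub_var_core_paths[OF assms])
  have "enat (card ({} :: gvert set) + card Q) \<le> kappa (GV n cs) (GE n cs) (CV j b) (XV i a)"
    by (rule kappa_ge_fan[OF finite_GV]) (use Q assms(4) in \<open>auto intro: card_ge_0_finite\<close>)
  thus ?thesis using Q(1) by (simp add: numeral_eq_enat numeral_2_eq_2)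
qed

lemma kappa_hub_var_core:
  assumes "j < length cs" "i < n" "b \<in> {1,2}" "a \<in> {3,4,5}"
  shows "kappa (GV n cs) (GE n cs) (CV j b) (XV i a) = 2"
  using kappa_hub_var_core_le[OF assms(4)] kappa_hub_var_core_ge[OF assms] by (rule order_antisym)

lemma kappa_hub_X1_ge_own_clause:
  assumes j: "j < length cs" and b: "b \<in> {1,2}" and pos: "(i, True) \<notin> cs ! j" and neg: "(i, False) \<in> cs ! j"
  shows "enat (card (clause_neighbours n cs (XV i 1)) + 1) \<le> kappa (GV n cs) (GE n cs) (CV j b) (XV i 1)"
proof -
  let ?N = "clause_neighbours n cs (XV i 1)" and ?v = "CV j b" and ?w = "XV i 1"
  let ?T = "?N - clause_gadget j"
  let ?route = "if b = 1 then [?v, ?w] else [?v, CV j 3, CV j 1, ?w]"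
  let ?Q = "{[?v, XV i 2, ?w], ?route}"
  have i: "i < n" using literal_var_less[OF j neg] .
  have "?N \<inter> clause_gadget j = {CV j 1}"
    using neg pos j i by (auto simp: clause_gadget_def CV_in_clause_neighbours GE_CX)
  hence T: "?T = ?N - {CV j 1}" "CV j 1 \<in> ?N" by auto
  have inV: "?v \<in> GV n cs" "?w \<in> GV n cs" "XV i 2 \<in> GV n cs" using j b i by (auto simp: GV_simps)
  have E: "GE n cs ?v (XV i 2)" "GE n cs (XV i 2) ?w" "GE n cs (CV j 1) ?w"
    using GE_hub_literal[OF j neg i] b GE_hub_literal[OF j neg i, of 1] i by (auto simp: GE_XX)
  have route: "is_path (GV n cs) (GE n cs) ?v ?w ?route"
  proof (cases "b = 1")
    case False
    hence b2: "b = 2" using b by simp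
    have "GE n cs (CV j 2) (CV j 3)" "GE n cs (CV j 3) (CV j 1)"
      using GE_clause_hub_core[OF j, of 2 3] GE_clause_hub_core[OF j, of 1 3] GE_sym[of n cs "CV j 3"]
      by auto
    thus ?thesis using b2 E inV j by (simp add: is_path_Cons_Cons is_path_singleton GV_simps)
  qed (use E inV in \<open>simp add: is_path_Cons_Cons is_path_singleton\<close>)
  have route_int: "interior ?route \<subseteq> {CV j 3, CV j 1}" by (cases "b = 1") (simp_all add: interior_simps)
  have notin: "CV j 1 \<notin> ?T" "CV j 3 \<notin> ?T" "XV i 2 \<notin> ?T"
    by (auto simp: clause_gadget_def XV_notin_clause_neighbours)
  have "enat (card ?T + card ?Q) \<le> kappa (GV n cs) (GE n cs) ?v ?w"
  proof (rule kappa_ge_fan[OF finite_GV])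
    show "is_path (GV n cs) (GE n cs) ?v ?w [?v, t, ?w]" if "t \<in> ?T" for t
      by (rule path_via_other_clause[OF that j b])
    show "is_path (GV n cs) (GE n cs) ?v ?w q" if "q \<in> ?Q" for q
      using that route E inV by (auto simp: is_path_Cons_Cons is_path_singleton)
    show "interior q \<inter> interior q' = {}" if "q \<in> ?Q" "q' \<in> ?Q" "q \<noteq> q'" for q q'
      using that route_int by (auto simp: interior_simps)
    show "interior q \<inter> ?T = {}" if "q \<in> ?Q" for q
      using that route_int notin by (auto simp: interior_simps)
  qed (simp_all add: finite_clause_neighbours)
  moreover have "card ?Q = 2" by auto
  moreover have "card ?T + 1 = card ?N" using T card.remove[OF finite_clause_neighbours] by simp
  ultimately show ?thesis by simp
qed

lemma kappa_hub_X1_ge_other_clause: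
  assumes j: "j < length cs" and b: "b \<in> {1,2}" and i: "i < n"
    and "(i, True) \<notin> cs ! j" "(i, False) \<notin> cs ! j"
  shows "enat (card (clause_neighbours n cs (XV i 1)) + (if \<exists>k < length cs. (i, False) \<in> cs ! k then 1 else 0))
    \<le> kappa (GV n cs) (GE n cs) (CV j b) (XV i 1)"
proof -
  let ?N = "clause_neighbours n cs (XV i 1)" and ?v = "CV j b" and ?w = "XV i 1"
  have fan: "is_path (GV n cs) (GE n cs) ?v ?w [?v, t, ?w]" if "t \<in> ?N" for t
  proof (rule path_via_other_clause[OF _ j b])
    show "t \<in> ?N - clause_gadget j"
      using that assms(4,5) by (auto simp: clause_gadget_def clause_neighbours_def GE_CX)
  qed
  show ?thesis
  proof (cases "\<exists>k < length cs. (i, False) \<in> cs ! k")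
    case True
    then obtain k where k: "k < length cs" "(i, False) \<in> cs ! k" by blast
    have kj: "k \<noteq> j" using k assms(5) by blast
    have E: "GE n cs ?v (CV k 2)" "GE n cs (CV k 2) (XV i 2)" "GE n cs (XV i 2) ?w"
      using GE_hub_hub[OF kj[symmetric] j k(1) b] GE_hub_literal[OF k i, of 2] i by (auto simp: GE_XX)
    have "CV k 2 \<notin> ?N" using clause_consistent[OF k(1)] k(2) by (auto simp: CV_in_clause_neighbours GE_CX)
    hence "enat (card ?N + card {[?v, CV k 2, XV i 2, ?w]}) \<le> kappa (GV n cs) (GE n cs) ?v ?w"
      using fan E i j b k(1) kj
      by (intro kappa_ge_fan[OF finite_GV])
        (auto simp: is_path_Cons_Cons is_path_singleton interior_simps GV_simps finite_clause_neighbours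
          XV_notin_clause_neighbours)
    thus ?thesis using True by simp
  next
    case False
    have "enat (card ?N + card ({} :: gvert list set)) \<le> kappa (GV n cs) (GE n cs) ?v ?w"
      using fan by (intro kappa_ge_fan[OF finite_GV]) (auto simp: finite_clause_neighbours)
    thus ?thesis using False by auto
  qed
qed

lemma kappa_hub_X1:
  assumes "j < length cs" "b \<in> {1,2}" "i < n" "(i, True) \<notin> cs ! j"
  shows "kappa (GV n cs) (GE n cs) (CV j b) (XV i 1) =
    card (clause_neighbours n cs (XV i 1)) + (if \<exists>k < length cs. (i, False) \<in> cs ! k then 1 else 0)"
proof (rule order_antisym)
  show "kappa (GV n cs) (GE n cs) (CV j b) (XV i 1) \<le>
    card (clause_neighbours n cs (XV i 1)) + (if \<exists>k < length cs. (i, False) \<in> cs ! k then 1 else 0)"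
    using kappa_hub_X1_le_Suc[of n cs j b i] kappa_hub_X1_le_card[OF assms(3,4)] by auto
  show "enat (card (clause_neighbours n cs (XV i 1)) + (if \<exists>k < length cs. (i, False) \<in> cs ! k then 1 else 0))
    \<le> kappa (GV n cs) (GE n cs) (CV j b) (XV i 1)"
  proof (cases "(i, False) \<in> cs ! j")
    case True thus ?thesis using kappa_hub_X1_ge_own_clause[OF assms(1,2,4) True] assms(1) by auto
  qed (rule kappa_hub_X1_ge_other_clause[OF assms])
qed

end

lemma kappa_hubs_X1_eq:
  assumes "sat3_instance n cs" "j < length cs" "i < n" "(i, True) \<notin> cs ! j"
  shows "kappa (GV n cs) (GE n cs) (CV j 1) (XV i 1) = kappa (GV n cs) (GE n cs) (CV j 2) (XV i 1)"
  using kappa_hub_X1[OF assms(1,2) _ assms(3,4), of 1] kappa_hub_X1[OF assms(1,2) _ assms(3,4), of 2]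
  by simp

lemma kappa_hubs_X2_eq:
  assumes "sat3_instance n cs" "j < length cs" "i < n" "(i, False) \<notin> cs ! j"
  shows "kappa (GV n cs) (GE n cs) (CV j 1) (XV i 2) = kappa (GV n cs) (GE n cs) (CV j 2) (XV i 2)"
proof -
  let ?cs = "negate_literals cs"
  have "kappa (GV n ?cs) (GE n ?cs) (CV j 1) (XV i 1) = kappa (GV n ?cs) (GE n ?cs) (CV j 2) (XV i 1)"
    using assms(2-4)
    by (intro kappa_hubs_X1_eq sat3_instance_negate_literals assms(1)) (simp_all add: negate_literals_nth)
  thus ?thesis
    using kappa_mirror[of n cs "CV j 1" "XV i 2"] kappa_mirror[of n cs "CV j 2" "XV i 2"] by simp
qed

section \<open>Resolving sets of G(S)\<close>

lemma card_le_Suc_card_Int: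
  assumes "finite A" "\<And>a b. a \<in> A \<Longrightarrow> b \<in> A \<Longrightarrow> a \<noteq> b \<Longrightarrow> a \<in> W \<or> b \<in> W"
  shows "card A \<le> Suc (card (A \<inter> W))"
proof -
  have "card (A - W) \<le> Suc 0" using assms by (subst card_le_Suc0_iff_eq) auto
  moreover have "card A = card (A \<inter> W) + card (A - W)"
    using assms(1) by (metis Int_Diff_Un Int_Diff_disjoint card_Un_disjoint finite_Diff finite_Int)
  ultimately show ?thesis by simp
qed

lemma resolving_clause_core:
  assumes W: "resolving (GV n cs) (GE n cs) W" and j: "j < length cs"
  shows "2 \<le> card (W \<inter> {CV j 3, CV j 4, CV j 5})"
proof -
  have "CV j a \<in> W \<or> CV j a' \<in> W" if a: "a \<in> {3,4,5}" "a' \<in> {3,4,5}" "a \<noteq> a'" for a a'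
  proof (rule resolving_twins[OF W finite_GV _ _ _ GE_sym GE_irrefl])
    show "CV j a \<in> GV n cs" "CV j a' \<in> GV n cs" "CV j a \<noteq> CV j a'" using a j by (auto simp: GV_simps)
  qed (rule GE_clause_core_twins[OF a(1,2)])
  hence "x \<in> W \<or> y \<in> W" if "x \<in> CV j ` {3,4,5}" "y \<in> CV j ` {3,4,5}" "x \<noteq> y" for x y
    using that by blast
  from card_le_Suc_card_Int[of "CV j ` {3,4,5}" W, OF _ this] show ?thesis
    by (simp add: Int_commute)
qed

lemma resolving_var_twin:
  assumes "resolving (GV n cs) (GE n cs) W" "i < n"
  shows "XV i 4 \<in> W \<or> XV i 5 \<in> W"
proof (rule resolving_twins[OF assms(1) finite_GV _ _ _ GE_sym GE_irrefl])
  show "XV i 4 \<in> GV n cs" "XV i 5 \<in> GV n cs" "XV i 4 \<noteq> XV i 5" using assms(2) by (auto simp: GV_simps)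
qed (rule GE_var_twins)

lemma resolving_var_gadget:
  assumes W: "resolving (GV n cs) (GE n cs) W" and i: "i < n"
  shows "2 \<le> card (W \<inter> var_gadget i)"
proof (rule ccontr)
  assume "\<not> 2 \<le> card (W \<inter> var_gadget i)"
  hence le1: "card (W \<inter> var_gadget i) \<le> Suc 0" by simp
  obtain t where t: "t \<in> {4,5}" "XV i t \<in> W" using resolving_var_twin[OF W i] by blast
  have fin: "finite (W \<inter> var_gadget i)" by (simp add: var_gadget_def)
  have tW: "XV i t \<in> W \<inter> var_gadget i" using t by (auto simp: var_gadget_def)
  have Wi: "x = XV i t" if "x \<in> W \<inter> var_gadget i" for x
    using le1 card_le_Suc0_iff_eq[OF fin] that tW by blast
  define t' where "t' = 9 - t"
  have t': "t' \<in> {4,5}" "t' \<noteq> t" using t by (auto simp: t'_def)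
  have core: "XV i 3 \<in> {XV i 3, XV i 4, XV i 5}" "XV i t' \<in> {XV i 3, XV i 4, XV i 5}" using t' by auto
  have "kappa (GV n cs) (GE n cs) (XV i 3) w = kappa (GV n cs) (GE n cs) (XV i t') w" if "w \<in> W" for w
  proof (cases "w \<in> var_gadget i")
    case True
    hence "w = XV i t" using Wi that by blast
    moreover have "kappa (GV n cs) (GE n cs) (XV i 3) (XV i t) = 3"
      by (rule kappa_var_core_twin[OF i t(1)]) (use t in auto)
    moreover have "kappa (GV n cs) (GE n cs) (XV i t') (XV i t) = 3"
      by (rule kappa_var_core_twin[OF i t(1)]) (use t' in auto)
    ultimately show ?thesis by simp
  next
    case False
    show ?thesis by (rule kappa_var_core_outside[OF i core False])
  qed
  moreover have "XV i 3 \<in> GV n cs" "XV i t' \<in> GV n cs" "XV i 3 \<noteq> XV i t'"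
    using i t' by (auto simp: GV_simps)
  ultimately show False using resolving_distinguishes[OF W] by metis
qed

lemma GV_eq_gadgets: "GV n cs = (\<Union>i<n. var_gadget i) \<union> (\<Union>j<length cs. clause_gadget j)"
proof (rule set_eqI)
  fix x show "x \<in> GV n cs \<longleftrightarrow> x \<in> (\<Union>i<n. var_gadget i) \<union> (\<Union>j<length cs. clause_gadget j)"
    by (cases x) (auto simp: GV_simps var_gadget_def clause_gadget_def)
qed

lemma card_eq_sum_gadgets:
  assumes "W \<subseteq> GV n cs"
  shows "card W = (\<Sum>i<n. card (W \<inter> var_gadget i)) + (\<Sum>j<length cs. card (W \<inter> clause_gadget j))"
proof -
  let ?X = "\<Union>i<n. W \<inter> var_gadget i" and ?C = "\<Union>j<length cs. W \<inter> clause_gadget j"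
  have "W = ?X \<union> ?C" using assms GV_eq_gadgets[of n cs] by auto
  moreover have "?X \<inter> ?C = {}" by (auto simp: var_gadget_def clause_gadget_def)
  moreover have "card ?X = (\<Sum>i<n. card (W \<inter> var_gadget i))"
    by (rule card_UN_disjoint) (auto simp: var_gadget_def)
  moreover have "card ?C = (\<Sum>j<length cs. card (W \<inter> clause_gadget j))"
    by (rule card_UN_disjoint) (auto simp: clause_gadget_def)
  ultimately show ?thesis
    by (metis card_Un_disjoint finite_UN_I finite_Int finite_lessThan var_gadget_def clause_gadget_def
        finite.insertI finite.emptyI)
qed

lemma sum_eq_at_lower_bound:
  fixes f :: "'i \<Rightarrow> nat"
  assumes "finite I" "\<And>i. i \<in> I \<Longrightarrow> c \<le> f i" "sum f I \<le> c * card I" "i \<in> I"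
  shows "f i = c"
proof (rule ccontr)
  assume "f i \<noteq> c"
  hence "c < f i" using assms(2)[OF assms(4)] by simp
  hence "sum (\<lambda>_. c) I < sum f I"
    using sum_strict_mono_ex1[OF assms(1), of "\<lambda>_. c" f] assms(2,4) by blast
  thus False using assms(3) by (simp add: mult.commute)
qed

lemma resolving_clause_gadget:
  assumes "resolving (GV n cs) (GE n cs) W" "j < length cs"
  shows "2 \<le> card (W \<inter> clause_gadget j)"
proof -
  have "W \<inter> {CV j 3, CV j 4, CV j 5} \<subseteq> W \<inter> clause_gadget j" by (auto simp: clause_gadget_def)
  hence "card (W \<inter> {CV j 3, CV j 4, CV j 5}) \<le> card (W \<inter> clause_gadget j)"
    by (rule card_mono[rotated]) (simp add: clause_gadget_def)
  thus ?thesis using resolving_clause_core[OF assms] by simp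
qed

lemma resolving_card_2mn_gadgets:
  assumes W: "resolving (GV n cs) (GE n cs) W" and card: "card W = 2 * (length cs + n)"
  shows "i < n \<Longrightarrow> card (W \<inter> var_gadget i) = 2"
    and "j < length cs \<Longrightarrow> card (W \<inter> clause_gadget j) = 2"
proof -
  have geX: "2 \<le> card (W \<inter> var_gadget i)" if "i \<in> {..<n}" for i
    using resolving_var_gadget[OF W] that by simp
  have geC: "2 \<le> card (W \<inter> clause_gadget j)" if "j \<in> {..<length cs}" for j
    using resolving_clause_gadget[OF W] that by simp
  have sX: "2 * n \<le> (\<Sum>i<n. card (W \<inter> var_gadget i))"
    using sum_mono[of "{..<n}" "\<lambda>_. 2::nat" "\<lambda>i. card (W \<inter> var_gadget i)"] geX by simp
  have sC: "2 * length cs \<le> (\<Sum>j<length cs. card (W \<inter> clause_gadget j))"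
    using sum_mono[of "{..<length cs}" "\<lambda>_. 2::nat" "\<lambda>j. card (W \<inter> clause_gadget j)"] geC by simp
  have dec: "card W = (\<Sum>i<n. card (W \<inter> var_gadget i)) + (\<Sum>j<length cs. card (W \<inter> clause_gadget j))"
    using W by (intro card_eq_sum_gadgets) (simp add: resolving_def)
  show "card (W \<inter> var_gadget i) = 2" if "i < n"
    by (rule sum_eq_at_lower_bound[of "{..<n}" 2 "\<lambda>i. card (W \<inter> var_gadget i)"])
      (use geX dec card sC that in auto)
  show "card (W \<inter> clause_gadget j) = 2" if "j < length cs"
    by (rule sum_eq_at_lower_bound[of "{..<length cs}" 2 "\<lambda>j. card (W \<inter> clause_gadget j)"])
      (use geC dec card sX that in auto)
qed

lemma resolving_card_2mn:
  assumes W: "resolving (GV n cs) (GE n cs) W" and card: "card W = 2 * (length cs + n)"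
  shows "j < length cs \<Longrightarrow> W \<inter> clause_gadget j \<subseteq> {CV j 3, CV j 4, CV j 5}"
    and "i < n \<Longrightarrow> \<not> (XV i 1 \<in> W \<and> XV i 2 \<in> W)"
proof -
  have fW: "finite W" using W finite_subset[OF _ finite_GV] by (auto simp: resolving_def)
  show "W \<inter> clause_gadget j \<subseteq> {CV j 3, CV j 4, CV j 5}" if j: "j < length cs"
  proof -
    have fin: "finite (W \<inter> clause_gadget j)" using fW by simp
    have core: "W \<inter> {CV j 3, CV j 4, CV j 5} \<subseteq> W \<inter> clause_gadget j" by (auto simp: clause_gadget_def)
    hence "W \<inter> {CV j 3, CV j 4, CV j 5} = W \<inter> clause_gadget j"
      using card_subset_eq[OF fin core] card_mono[OF fin core] resolving_clause_core[OF W j]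
        resolving_card_2mn_gadgets(2)[OF W card j] by simp
    thus ?thesis by blast
  qed
  show "\<not> (XV i 1 \<in> W \<and> XV i 2 \<in> W)" if i: "i < n"
  proof
    assume x12: "XV i 1 \<in> W \<and> XV i 2 \<in> W"
    obtain t where t: "t \<in> {4,5}" "XV i t \<in> W" using resolving_var_twin[OF W i] by blast
    hence "{XV i 1, XV i 2, XV i t} \<subseteq> W \<inter> var_gadget i" using x12 by (auto simp: var_gadget_def)
    hence "card {XV i 1, XV i 2, XV i t} \<le> card (W \<inter> var_gadget i)"
      by (rule card_mono[rotated]) (use fW in simp)
    thus False using t resolving_card_2mn_gadgets(1)[OF W card i] by auto
  qed
qed

lemma kappa_hubs_eq:
  assumes inst: "sat3_instance n cs" and j: "j < length cs" and w: "w \<in> GV n cs"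
    and core: "\<And>k c. w = CV k c \<Longrightarrow> c \<in> {3,4,5}"
    and X1: "\<And>i. w = XV i 1 \<Longrightarrow> (i, True) \<notin> cs ! j"
    and X2: "\<And>i. w = XV i 2 \<Longrightarrow> (i, False) \<notin> cs ! j"
  shows "kappa (GV n cs) (GE n cs) (CV j 1) w = kappa (GV n cs) (GE n cs) (CV j 2) w"
proof (cases w)
  case (CV k c)
  hence c: "c \<in> {3,4,5}" and k: "k < length cs" using core w by (auto simp: GV_simps)
  show ?thesis
  proof (cases "k = j")
    case True thus ?thesis using kappa_hub_own_core[OF inst j _ c] CV by simp
  next
    case False thus ?thesis using kappa_hub_other_core[OF _ j k _ c] CV by simp
  qed
next
  case (XV i a)
  hence i: "i < n" and "a \<in> {1,2,3,4,5}" using w by (auto simp: GV_simps)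
  hence "a = 1 \<or> a = 2 \<or> a \<in> {3,4,5}" by auto
  thus ?thesis
  proof (elim disjE)
    assume "a = 1" thus ?thesis using kappa_hubs_X1_eq[OF inst j i] X1 XV by simp
  next
    assume "a = 2" thus ?thesis using kappa_hubs_X2_eq[OF inst j i] X2 XV by simp
  next
    assume "a \<in> {3,4,5}" thus ?thesis using kappa_hub_var_core[OF inst j i] XV by simp
  qed
qed

lemma satisfiable_if_resolving_card_2mn:
  assumes inst: "sat3_instance n cs" and W: "resolving (GV n cs) (GE n cs) W"
    and card: "card W = 2 * (length cs + n)"
  shows "satisfiable cs"
  unfolding satisfiable_def
proof (intro exI[of _ "\<lambda>i. XV i 1 \<in> W"] ballI)
  fix C assume C: "C \<in> set cs"
  show "\<exists>(i, s)\<in>C. (XV i 1 \<in> W) = s"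
  proof (rule ccontr)
    assume unsat: "\<not> (\<exists>(i, s)\<in>C. (XV i 1 \<in> W) = s)"
    obtain j where j: "j < length cs" "cs ! j = C" using C by (auto simp: in_set_conv_nth)
    have "kappa (GV n cs) (GE n cs) (CV j 1) w = kappa (GV n cs) (GE n cs) (CV j 2) w" if w: "w \<in> W" for w
    proof (rule kappa_hubs_eq[OF inst j(1)])
      show wV: "w \<in> GV n cs" using W w by (auto simp: resolving_def)
      show "c \<in> {3,4,5}" if wkc: "w = CV k c" for k c
      proof -
        have "k < length cs" "CV k c \<in> W \<inter> clause_gadget k"
          using wV w wkc by (auto simp: GV_simps clause_gadget_def)
        thus ?thesis using resolving_card_2mn(1)[OF W card] by blast
      qed
      show "(i, True) \<notin> cs ! j" if "w = XV i 1" for i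
        using unsat j(2) w that by blast
      show "(i, False) \<notin> cs ! j" if wi: "w = XV i 2" for i
      proof -
        have "i < n" using wV wi by (simp add: GV_simps)
        hence "XV i 1 \<notin> W" using resolving_card_2mn(2)[OF W card] w wi by blast
        thus ?thesis using unsat j(2) by blast
      qed
    qed
    moreover have "CV j 1 \<in> GV n cs" "CV j 2 \<in> GV n cs" "CV j 1 \<noteq> CV j 2" using j by (auto simp: GV_simps)
    ultimately show False using resolving_distinguishes[OF W] by blast
  qed
qed

theorem mainTheorem16:
  fixes n :: nat and cs :: "clause list"
  assumes "sat3_instance n cs"
    and "cdim (GV n cs) (GE n cs) = 2 * (length cs + n)"
  shows "satisfiable cs"
proof -
  obtain W where "resolving (GV n cs) (GE n cs) W" "finite W" "card W = cdim (GV n cs) (GE n cs)"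
    by (rule cdim_attained[OF finite_GV])
  thus ?thesis using satisfiable_if_resolving_card_2mn[OF assms(1)] assms(2) by simp
qed

end
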